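(* Consider the model and dynamics described in the context, with the Glauber dynamics constructed from independent unit-rate Poisson processes as described there, for any $\alpha\in\mathbb{R}$, $\eta\in(0,1]$ and $\beta_n\in(0,\infty]$. Let $\gamma_n,t_n>0$ be sequences with $\gamma_n^2t_n/n\to0$ as $n\to\infty$. Then $$\sup_{t\in[0,t_n]}\frac{\gamma_n}{V_n^k}\big|\mathcal{M}_n^k(t)\big|\Rightarrow0\quad\text{as }n\to\infty,\quad\text{for all }k\in\{1,2\}.$$ If moreover $\gamma_n/\sqrt n\to0$ as $n\to\infty$, then $$\gamma_n\Big(\frac{\mathcal{M}_n^1}{V_n^1},\frac{\mathcal{M}_n^2}{V_n^2}\Big)\Rightarrow0\quad\text{in }D_{\mathbb{R}^2}[0,\infty)\text{ as }n\to\infty.$$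
   Context: Model: for each $n$, the node set $\mathcal{V}_n=\mathcal{V}_n^1\cup\mathcal{V}_n^2$ is a disjoint union of two communities of sizes $V_n^k$ with $V_n^k/n\to v^k\in(0,\infty)$. The graph $\mathcal{G}_n$ is a stochastic block model: each pair of distinct nodes is an edge independently with probability $a\lambda_n/n$ within a community and $b\lambda_n/n$ across communities ($a>b>0$, $\lambda_n\to\infty$); $u\sim v$ denotes adjacency. For $\sigma:\mathcal{V}_n\to\{-1,1\}$, $\alpha_n=\alpha\lambda_n/n$ and $\Delta_n(\sigma,u)=2\sigma(u)[\sum_{v\sim u}\sigma(v)-\alpha_n\sum_{v\ne u}\sigma(v)]$; $r(x)=1/(1+e^x)$, with the convention $r(\beta_nx)=\mathbf{1}\{x<0\}+\tfrac12\mathbf{1}\{x=0\}$ if $\beta_n=\infty$. The Glauber dynamics $\boldsymbol{\sigma}_n(t)$ is the continuous-time Markov chain in which each spin $u$ flips independently at rate $r(\beta_n\Delta_n(\boldsymbol{\sigma}_n(t),u))$, started from the configuration in which independently each node, with probability $\eta$, has its correct spin ($+1$ on $\mathcal{V}_n^1$, $-1$ on $\mathcal{V}_n^2$) and otherwise a uniform random spin. Let $\boldsymbol{z}^k_n(t)=\frac1{V_n^k}\sum_{u\in\mathcal{V}_n^k}\boldsymbol{\sigma}_n(t,u)$. For $s\in\{-,+\}$ let $$\boldsymbol{i}^{k,s}_n(t)=\int_0^t\sum_{u\in\mathcal{V}_n^k:\ \boldsymbol{\sigma}_n(\tau,u)=s1}r\big(\beta_n\Delta_n(\boldsymbol{\sigma}_n(\tau),u)\big)\,d\tau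 .$$ The chain is constructed from independent unit-rate Poisson processes $\mathcal{N}^k_+,\mathcal{N}^k_-$ ($k=1,2$) so that $\boldsymbol{z}^k_n(t)-\boldsymbol{z}^k_n(0)=\frac{2}{V_n^k}\big[\mathcal{N}^k_+(\boldsymbol{i}^{k,-}_n(t))-\mathcal{N}^k_-(\boldsymbol{i}^{k,+}_n(t))\big]$ for all $t\ge0$. Define $$\mathcal{M}^k_n(t)=\mathcal{N}^k_+(\boldsymbol{i}^{k,-}_n(t))-\mathcal{N}^k_-(\boldsymbol{i}^{k,+}_n(t))+\int_0^t\sum_{u\in\mathcal{V}_n^k}\boldsymbol{\sigma}_n(\tau,u)\,r\big(\beta_n\Delta_n(\boldsymbol{\sigma}_n(\tau),u)\big)d\tau .$$ $D_{\mathbb{R}^2}[0,\infty)$ is the space of càdlàg functions $[0,\infty)\to\mathbb{R}^2$ with the topology of uniform convergence over compact sets; $\Rightarrow$ is weak convergence. *)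

theory Defs
  imports "HOL-Probability.Probability"
begin

text \<open>r(beta x) = 1/(1+exp(beta x)); for beta = infinity the zero-temperature convention.\<close>
definition rfun :: "ereal \<Rightarrow> real \<Rightarrow> real" where
  "rfun \<beta> x = (if \<beta> = \<infinity> then (if x < 0 then 1 else if x = 0 then 1/2 else 0)
                 else 1 / (1 + exp (real_of_ereal \<beta> * x)))"

definition nodes :: "nat \<Rightarrow> nat \<Rightarrow> nat set" where
  "nodes V1 V2 = {..<V1 + V2}"

definition comm :: "nat \<Rightarrow> nat \<Rightarrow> nat \<Rightarrow> nat set" where
  "comm V1 V2 k = (if k = 1 then {..<V1} else {V1..<V1 + V2})"

definition csize :: "nat \<Rightarrow> nat \<Rightarrow> nat \<Rightarrow> nat" where
  "csize V1 V2 k = (if k = 1 then V1 else V2)"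

definition correct :: "nat \<Rightarrow> nat \<Rightarrow> real" where
  "correct V1 u = (if u < V1 then 1 else -1)"

definition configs :: "nat \<Rightarrow> nat \<Rightarrow> (nat \<Rightarrow> real) set" where
  "configs V1 V2 = {x. (\<forall>u\<in>nodes V1 V2. x u = 1 \<or> x u = -1) \<and> (\<forall>u. u \<notin> nodes V1 V2 \<longrightarrow> x u = 0)}"

text \<open>Delta_n(sigma,u) = 2 sigma(u) [sum_{v~u} sigma(v) - alpha_n sum_{v<>u} sigma(v)],
  with alpha_n = alpha lambda_n / n passed as the argument al.\<close>
definition Delta :: "nat \<Rightarrow> nat \<Rightarrow> (nat \<Rightarrow> nat \<Rightarrow> bool) \<Rightarrow> real \<Rightarrow> (nat \<Rightarrow> real) \<Rightarrow> nat \<Rightarrow> real" where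
  "Delta V1 V2 g al x u = 2 * x u * ((\<Sum>v\<in>nodes V1 V2 - {u}. if g u v then x v else 0)
                                      - al * (\<Sum>v\<in>nodes V1 V2 - {u}. x v))"

definition simple_on :: "nat set \<Rightarrow> (nat \<Rightarrow> nat \<Rightarrow> bool) \<Rightarrow> bool" where
  "simple_on A g = (\<forall>u\<in>A. \<not> g u u \<and> (\<forall>v\<in>A. g u v = g v u))"

definition sbm_prob :: "nat \<Rightarrow> nat \<Rightarrow> real \<Rightarrow> real \<Rightarrow> (nat \<Rightarrow> nat \<Rightarrow> bool) \<Rightarrow> real" where
  "sbm_prob V1 V2 pin pout g =
    (if simple_on (nodes V1 V2) g then
       (\<Prod>(u,v)\<in>{(u,v). u \<in> nodes V1 V2 \<and> v \<in> nodes V1 V2 \<and> u < v}.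
          (let p = (if (u < V1) = (v < V1) then pin else pout) in
           if g u v then p else 1 - p))
     else 0)"

text \<open>Initial law: independently, with prob. eta the correct spin, otherwise uniform.\<close>
definition init_prob :: "nat \<Rightarrow> nat \<Rightarrow> real \<Rightarrow> (nat \<Rightarrow> real) \<Rightarrow> real" where
  "init_prob V1 V2 \<eta> x =
     (\<Prod>u\<in>nodes V1 V2. \<eta> * (if x u = correct V1 u then 1 else 0) + (1 - \<eta>) / 2)"

definition flip :: "(nat \<Rightarrow> real) \<Rightarrow> nat \<Rightarrow> nat \<Rightarrow> real" where
  "flip x u = x(u := - x u)"

definition glauber_Q ::
  "nat \<Rightarrow> nat \<Rightarrow> (nat \<Rightarrow> nat \<Rightarrow> bool) \<Rightarrow> real \<Rightarrow> ereal \<Rightarrow> (nat \<Rightarrow> real) \<Rightarrow> (nat \<Rightarrow> real) \<Rightarrow> real" where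
  "glauber_Q V1 V2 g al \<beta> x y =
     (if x = y then - (\<Sum>u\<in>nodes V1 V2. rfun \<beta> (Delta V1 V2 g al x u))
      else (\<Sum>u\<in>nodes V1 V2. if y = flip x u then rfun \<beta> (Delta V1 V2 g al x u) else 0))"

fun glauber_Qpow ::
  "nat \<Rightarrow> nat \<Rightarrow> (nat \<Rightarrow> nat \<Rightarrow> bool) \<Rightarrow> real \<Rightarrow> ereal \<Rightarrow> nat \<Rightarrow> (nat \<Rightarrow> real) \<Rightarrow> (nat \<Rightarrow> real) \<Rightarrow> real" where
  "glauber_Qpow V1 V2 g al \<beta> 0 x y = (if x = y then 1 else 0)"
| "glauber_Qpow V1 V2 g al \<beta> (Suc k) x y =
     (\<Sum>z\<in>configs V1 V2. glauber_Q V1 V2 g al \<beta> x z * glauber_Qpow V1 V2 g al \<beta> k z y)"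

definition glauber_P ::
  "nat \<Rightarrow> nat \<Rightarrow> (nat \<Rightarrow> nat \<Rightarrow> bool) \<Rightarrow> real \<Rightarrow> ereal \<Rightarrow> real \<Rightarrow> (nat \<Rightarrow> real) \<Rightarrow> (nat \<Rightarrow> real) \<Rightarrow> real" where
  "glauber_P V1 V2 g al \<beta> t x y = (\<Sum>k. t ^ k / fact k * glauber_Qpow V1 V2 g al \<beta> k x y)"

definition pw_const_cadlag :: "(real \<Rightarrow> 'b) \<Rightarrow> bool" where
  "pw_const_cadlag f = (\<forall>t\<ge>0. (\<exists>e>0. \<forall>s. t \<le> s \<and> s < t + e \<longrightarrow> f s = f t)
                         \<and> (t > 0 \<longrightarrow> (\<exists>e>0. \<exists>c. \<forall>s. t - e < s \<and> s < t \<longrightarrow> f s = c)))"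

text \<open>Joint law of (graph, spin process): graph ~ SBM, initial configuration independent of the
  graph with law init_prob, and, given the graph, sigma is the continuous-time Markov chain with
  generator glauber_Q (finite-dimensional distributions).  al = alpha_n.\<close>
definition is_glauber_sbm ::
  "'a measure \<Rightarrow> nat \<Rightarrow> nat \<Rightarrow> real \<Rightarrow> real \<Rightarrow> real \<Rightarrow> real \<Rightarrow> ereal
   \<Rightarrow> ('a \<Rightarrow> nat \<Rightarrow> nat \<Rightarrow> bool) \<Rightarrow> ('a \<Rightarrow> real \<Rightarrow> nat \<Rightarrow> real) \<Rightarrow> bool" where
  "is_glauber_sbm M V1 V2 pin pout \<eta> al \<beta> G \<sigma> \<longleftrightarrow>
     (\<forall>u v. (\<lambda>\<omega>. G \<omega> u v) \<in> measurable M (count_space UNIV)) \<and>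
     (\<forall>t u. (\<lambda>\<omega>. \<sigma> \<omega> t u) \<in> borel_measurable M) \<and>
     (\<forall>\<omega>\<in>space M. pw_const_cadlag (\<sigma> \<omega>) \<and>
         (\<forall>t\<ge>0. \<forall>u\<in>nodes V1 V2. \<sigma> \<omega> t u = 1 \<or> \<sigma> \<omega> t u = -1)) \<and>
     (\<forall>g ts xs. length ts = length xs \<and> ts \<noteq> [] \<and> ts ! 0 = 0 \<and> sorted_wrt (<) ts
        \<and> set xs \<subseteq> configs V1 V2 \<longrightarrow>
        prob_space.prob M {\<omega>\<in>space M. (\<forall>u\<in>nodes V1 V2. \<forall>v\<in>nodes V1 V2. G \<omega> u v = g u v)
              \<and> (\<forall>j<length ts. \<forall>u\<in>nodes V1 V2. \<sigma> \<omega> (ts ! j) u = (xs ! j) u)}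
        = sbm_prob V1 V2 pin pout g * init_prob V1 V2 \<eta> (xs ! 0)
          * (\<Prod>j\<in>{1..<length ts}. glauber_P V1 V2 g al \<beta> (ts ! j - ts ! (j - 1)) (xs ! (j - 1)) (xs ! j)))"

definition indep_unit_poisson ::
  "'a measure \<Rightarrow> 'i set \<Rightarrow> ('i \<Rightarrow> 'a \<Rightarrow> real \<Rightarrow> real) \<Rightarrow> bool" where
  "indep_unit_poisson M I N \<longleftrightarrow>
     (\<forall>i\<in>I. \<forall>t. (\<lambda>\<omega>. N i \<omega> t) \<in> borel_measurable M) \<and>
     (\<forall>i\<in>I. \<forall>\<omega>\<in>space M. N i \<omega> 0 = 0 \<and> mono_on {0..} (N i \<omega>) \<and> pw_const_cadlag (N i \<omega>)
                         \<and> (\<forall>t\<ge>0. N i \<omega> t \<in> \<nat>)) \<and>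
     (\<forall>ts (c :: 'i \<Rightarrow> nat \<Rightarrow> nat). sorted_wrt (<) ts \<and> (\<forall>t\<in>set ts. 0 < t) \<longrightarrow>
        prob_space.prob M {\<omega>\<in>space M. \<forall>i\<in>I. \<forall>j<length ts.
             N i \<omega> (ts ! j) - N i \<omega> (if j = 0 then 0 else ts ! (j - 1)) = real (c i j)}
        = (\<Prod>i\<in>I. \<Prod>j<length ts.
             (let d = ts ! j - (if j = 0 then 0 else ts ! (j - 1)) in
              d ^ c i j / fact (c i j) * exp (- d))))"

definition frate :: "nat \<Rightarrow> nat \<Rightarrow> real \<Rightarrow> ereal \<Rightarrow> (nat \<Rightarrow> nat \<Rightarrow> bool) \<Rightarrow> (real \<Rightarrow> nat \<Rightarrow> real)
                      \<Rightarrow> real \<Rightarrow> nat \<Rightarrow> real" where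
  "frate V1 V2 al \<beta> g s \<tau> u = rfun \<beta> (Delta V1 V2 g al (s \<tau>) u)"

text \<open>i^{k,s}(t), with s = True for + and False for -\<close>
definition icum :: "nat \<Rightarrow> nat \<Rightarrow> real \<Rightarrow> ereal \<Rightarrow> (nat \<Rightarrow> nat \<Rightarrow> bool) \<Rightarrow> (real \<Rightarrow> nat \<Rightarrow> real)
                      \<Rightarrow> nat \<Rightarrow> bool \<Rightarrow> real \<Rightarrow> real" where
  "icum V1 V2 al \<beta> g s k sg t =
     integral {0..t} (\<lambda>\<tau>. \<Sum>u\<in>comm V1 V2 k.
        if s \<tau> u = (if sg then 1 else -1) then frate V1 V2 al \<beta> g s \<tau> u else 0)"

definition zmag :: "nat \<Rightarrow> nat \<Rightarrow> (real \<Rightarrow> nat \<Rightarrow> real) \<Rightarrow> nat \<Rightarrow> real \<Rightarrow> real" where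
  "zmag V1 V2 s k t = (\<Sum>u\<in>comm V1 V2 k. s t u) / real (csize V1 V2 k)"

text \<open>The process M^k(t); Np k sg is N^k_+ (sg = True) or N^k_- (sg = False).\<close>
definition Mproc :: "nat \<Rightarrow> nat \<Rightarrow> real \<Rightarrow> ereal \<Rightarrow> (nat \<Rightarrow> nat \<Rightarrow> bool) \<Rightarrow> (real \<Rightarrow> nat \<Rightarrow> real)
                      \<Rightarrow> (nat \<Rightarrow> bool \<Rightarrow> real \<Rightarrow> real) \<Rightarrow> nat \<Rightarrow> real \<Rightarrow> real" where
  "Mproc V1 V2 al \<beta> g s Np k t =
     Np k True (icum V1 V2 al \<beta> g s k False t) - Np k False (icum V1 V2 al \<beta> g s k True t)
     + integral {0..t} (\<lambda>\<tau>. \<Sum>u\<in>comm V1 V2 k. s \<tau> u * frate V1 V2 al \<beta> g s \<tau> u)"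

text \<open>For a sequence of processes X n on probability spaces P n: weak convergence to the
  (deterministic) zero path in D_{R^2}[0,infinity) with the topology of uniform convergence on
  compacts; since the limit is deterministic this is rendered as: for each T, the sup-norm
  on [0,T] converges in distribution to 0.\<close>
definition weak_conv_zero_D :: "(nat \<Rightarrow> 'a measure) \<Rightarrow> (nat \<Rightarrow> 'a \<Rightarrow> real \<Rightarrow> real \<times> real) \<Rightarrow> bool" where
  "weak_conv_zero_D P X \<longleftrightarrow>
     (\<forall>T\<ge>0. weak_conv_m (\<lambda>n. distr (P n) borel (\<lambda>\<omega>. SUP t\<in>{0..T}. norm (X n \<omega> t)))
                         (return borel 0))"

end

theory Submission
  imports Defs
begin

text \<open>
  Since all spins are \<open>\<plusminus>1\<close>, the drift integral in \<open>Mproc\<close> equals \<open>i\<^sup>+(t) - i\<^sup>-(t)\<close>, so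
  \<open>Mproc\<^sup>k(t) = (N\<^sub>+(i\<^sup>-(t)) - i\<^sup>-(t)) - (N\<^sub>-(i\<^sup>+(t)) - i\<^sup>+(t))\<close> is a difference of two
  compensated unit Poisson processes evaluated at times \<open>i\<^sup>\<plusminus>(t) \<in> [0, V\<^sup>k t]\<close>. Hence
  the supremum of \<open>|Mproc\<^sup>k|\<close> over \<open>[0, T]\<close> is controlled by the deviation of \<open>N\<^sub>\<plusminus>(s)\<close> from \<open>s\<close> on \<open>[0, V\<^sup>k T]\<close>,
  whatever the dynamics does. A Levy-Ottaviani maximal inequality on a grid, together with
  Chebyshev's inequality for Poisson variables, shows that this deviation exceeds \<open>a\<close> with
  probability \<open>O(V\<^sup>k T / a\<^sup>2)\<close>. Taking \<open>a = \<delta> V\<^sup>k / \<gamma>\<^sub>n\<close> gives \<open>O(\<gamma>\<^sub>n\<^sup>2 T / (\<delta>\<^sup>2 n)) \<rightarrow> 0\<close>,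
  that is, convergence in probability, hence in distribution, of the scaled suprema to \<open>0\<close>.
\<close>

section \<open>Chebyshev bounds and independent increments of Poisson processes\<close>

lemma exp_series_factorial_moments:
  fixes r :: real
  shows "(\<lambda>k. r ^ k / fact k) sums exp r"
    and "(\<lambda>k. real k * (r ^ k / fact k)) sums (r * exp r)"
    and "(\<lambda>k. real k * (real k - 1) * (r ^ k / fact k)) sums (r\<^sup>2 * exp r)"
proof -
  show s0: "(\<lambda>k. r ^ k / fact k) sums exp r"
    using exp_converges[of r] by (simp add: divide_inverse scaleR_conv_of_real mult.commute)
  have "(\<lambda>k. real (Suc k) * (r ^ Suc k / fact (Suc k))) = (\<lambda>k. r * (r ^ k / fact k))"
    by (rule ext) (simp add: fact_Suc divide_simps del: of_nat_Suc)
  hence "(\<lambda>k. real (Suc k) * (r ^ Suc k / fact (Suc k))) sums (r * exp r)"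
    using sums_mult[OF s0, of r] by simp
  thus "(\<lambda>k. real k * (r ^ k / fact k)) sums (r * exp r)"
    by (subst (asm) sums_Suc_iff) simp
  have "(\<lambda>k. real (Suc (Suc k)) * (real (Suc (Suc k)) - 1) * (r ^ Suc (Suc k) / fact (Suc (Suc k))))
        = (\<lambda>k. r\<^sup>2 * (r ^ k / fact k))"
    by (rule ext) (simp add: fact_Suc divide_simps power2_eq_square del: of_nat_Suc)
  hence "(\<lambda>k. real (Suc (Suc k)) * (real (Suc (Suc k)) - 1) * (r ^ Suc (Suc k) / fact (Suc (Suc k))))
           sums (r\<^sup>2 * exp r)"
    using sums_mult[OF s0, of "r\<^sup>2"] by simp
  thus "(\<lambda>k. real k * (real k - 1) * (r ^ k / fact k)) sums (r\<^sup>2 * exp r)"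
    by (subst (asm) sums_Suc_iff, subst (asm) sums_Suc_iff) simp
qed

lemma poisson_variance_sums:
  fixes r :: real
  shows "(\<lambda>k. r ^ k / fact k * exp (-r) * (real k - r)\<^sup>2) sums r"
proof -
  note s = exp_series_factorial_moments[of r]
  have "(\<lambda>k. exp (-r) * (real k * (real k - 1) * (r ^ k / fact k) + real k * (r ^ k / fact k)
          - (2*r) * (real k * (r ^ k / fact k)) + r\<^sup>2 * (r ^ k / fact k)))
        sums (exp (-r) * (r\<^sup>2 * exp r + r * exp r - (2*r) * (r * exp r) + r\<^sup>2 * exp r))"
    by (intro sums_mult sums_add sums_diff s)
  moreover have "exp (-r) * (r\<^sup>2 * exp r + r * exp r - (2*r) * (r * exp r) + r\<^sup>2 * exp r) = r"
    by (simp add: field_simps power2_eq_square exp_minus)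
  moreover have "(\<lambda>k. exp (-r) * (real k * (real k - 1) * (r ^ k / fact k) + real k * (r ^ k / fact k)
          - (2*r) * (real k * (r ^ k / fact k)) + r\<^sup>2 * (r ^ k / fact k)))
        = (\<lambda>k. r ^ k / fact k * exp (-r) * (real k - r)\<^sup>2)"
    by (rule ext) (simp add: field_simps power2_eq_square)
  ultimately show ?thesis by simp
qed

lemma poisson_pmf_chebyshev:
  fixes r A :: real
  assumes r: "0 < r" and A: "0 < A"
  shows "measure_pmf.prob (poisson_pmf r) {k. A \<le> \<bar>real k - r\<bar>} \<le> r / A\<^sup>2"
proof -
  let ?g = "\<lambda>k::nat. r ^ k / fact k * exp (-r) * (real k - r)\<^sup>2 / A\<^sup>2"
  have ind: "indicator {k. A \<le> \<bar>real k - r\<bar>} k \<le> ennreal ((real k - r)\<^sup>2 / A\<^sup>2)" for k :: nat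
  proof (cases "A \<le> \<bar>real k - r\<bar>")
    case True
    hence "A\<^sup>2 \<le> (real k - r)\<^sup>2"
      using A by (metis abs_ge_zero abs_of_pos power2_abs power_mono)
    thus ?thesis using True A by (simp add: indicator_def)
  qed (simp add: indicator_def)
  have "emeasure (measure_pmf (poisson_pmf r)) {k. A \<le> \<bar>real k - r\<bar>}
        = (\<integral>\<^sup>+k. indicator {k. A \<le> \<bar>real k - r\<bar>} k \<partial>measure_pmf (poisson_pmf r))"
    by simp
  also have "\<dots> \<le> (\<integral>\<^sup>+k. ennreal ((real k - r)\<^sup>2 / A\<^sup>2) \<partial>measure_pmf (poisson_pmf r))"
    by (intro nn_integral_mono ind)
  also have "\<dots> = (\<integral>\<^sup>+k. ennreal (pmf (poisson_pmf r) k) * ennreal ((real k - r)\<^sup>2 / A\<^sup>2) \<partial>count_space UNIV)"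
    by (rule nn_integral_measure_pmf)
  also have "\<dots> = (\<Sum>k. ennreal (?g k))"
    using r by (simp add: nn_integral_count_space_nat ennreal_mult'[symmetric])
  also have "\<dots> = ennreal (r / A\<^sup>2)"
    using sums_divide[OF poisson_variance_sums[of r], of "A\<^sup>2"] r A by (intro suminf_ennreal_eq) auto
  finally show ?thesis
    using r A by (simp add: measure_pmf.emeasure_eq_measure)
qed

lemma poisson_pmf_concentration:
  assumes r: "0 < r" and A: "0 < A" and small: "r / A\<^sup>2 \<le> 1/2"
  shows "1/2 \<le> measure_pmf.prob (poisson_pmf r) {v. \<bar>real v - r\<bar> < A}"
proof -
  have "{v. \<bar>real v - r\<bar> < A} = UNIV - {v. A \<le> \<bar>real v - r\<bar>}" by auto
  hence "measure_pmf.prob (poisson_pmf r) {v. \<bar>real v - r\<bar> < A}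
         = 1 - measure_pmf.prob (poisson_pmf r) {v. A \<le> \<bar>real v - r\<bar>}"
    using measure_pmf.prob_compl[of "{v. A \<le> \<bar>real v - r\<bar>}" "poisson_pmf r"] by simp
  thus ?thesis using poisson_pmf_chebyshev[OF r A] small by linarith
qed

lemma measure_pair_pmf_times:
  "measure_pmf.prob (pair_pmf p q) (A \<times> B) = measure_pmf.prob p A * measure_pmf.prob q B"
proof -
  have "measure_pmf.prob (pair_pmf p q) (A \<times> B)
        = measure_pmf.prob (pair_pmf p q) ((A \<inter> set_pmf p) \<times> (B \<inter> set_pmf q))"
    by (subst (1 2) measure_Int_set_pmf[symmetric])
       (auto intro!: arg_cong[where f = "measure_pmf.prob (pair_pmf p q)"])
  also have "\<dots> = measure_pmf.prob p (A \<inter> set_pmf p) * measure_pmf.prob q (B \<inter> set_pmf q)"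
    by (rule measure_pmf_prob_product) (auto intro: countable_subset[OF _ countable_set_pmf])
  finally show ?thesis
    by (simp add: measure_Int_set_pmf)
qed

lemma measure_Pi_pmf_insert_indep:
  assumes fin: "finite A" and x: "x \<notin> A" and R: "\<And>f g. (\<forall>l\<in>A. f l = g l) \<Longrightarrow> R f = R g"
  shows "measure_pmf.prob (Pi_pmf (insert x A) d p) {f. R f \<and> Q (f x)}
         = measure_pmf.prob (Pi_pmf (insert x A) d p) {f. R f} * measure_pmf.prob (p x) {v. Q v}"
proof -
  have split: "measure_pmf.prob (Pi_pmf (insert x A) d p) {f. R f \<and> S (f x)}
         = measure_pmf.prob (p x) {v. S v} * measure_pmf.prob (Pi_pmf A d p) {f. R f}" for S
  proof -
    have "R (f(x:=y)) = R f" for f y by (rule R) (use x in auto)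
    hence "(\<lambda>(y,f). f(x:=y)) -` {f. R f \<and> S (f x)} = {v. S v} \<times> {f. R f}"
      by auto
    thus ?thesis
      by (simp add: Pi_pmf_insert[OF fin x] measure_pair_pmf_times)
  qed
  show ?thesis
    using split[of Q] split[of "\<lambda>_. True"] by simp
qed

lemma countable_arrays_supported_on:
  assumes "finite I"
  shows "countable {c :: 'i \<Rightarrow> nat \<Rightarrow> nat. \<forall>i j. \<not> (i \<in> I \<and> j < q) \<longrightarrow> c i j = 0}"
proof -
  define g where "g F i j = (if i \<in> I \<and> j < q then F (i, j) else 0)" for F :: "'i \<times> nat \<Rightarrow> nat" and i j
  have "{c. \<forall>i j. \<not> (i \<in> I \<and> j < q) \<longrightarrow> c i j = 0} \<subseteq> g ` (PiE (I \<times> {..<q}) (\<lambda>_. UNIV))"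
  proof
    fix c :: "'i \<Rightarrow> nat \<Rightarrow> nat" assume "c \<in> {c. \<forall>i j. \<not> (i \<in> I \<and> j < q) \<longrightarrow> c i j = 0}"
    hence "c = g (restrict (\<lambda>(i,j). c i j) (I \<times> {..<q}))"
      by (auto simp: g_def fun_eq_iff)
    moreover have "restrict (\<lambda>(i,j). c i j) (I \<times> {..<q}) \<in> PiE (I \<times> {..<q}) (\<lambda>_. UNIV)"
      by (simp add: PiE_iff)
    ultimately show "c \<in> g ` (PiE (I \<times> {..<q}) (\<lambda>_. UNIV))" by (rule image_eqI)
  qed
  moreover have "countable (g ` (PiE (I \<times> {..<q}) (\<lambda>_. UNIV :: nat set)))"
    using assms by (intro countable_image countable_PiE) simp_all
  ultimately show ?thesis by (rule countable_subset)
qed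

definition prev_time :: "real list \<Rightarrow> nat \<Rightarrow> real" where
  "prev_time ts j = (if j = 0 then 0 else ts ! (j - 1))"

definition increments :: "('i \<Rightarrow> 'a \<Rightarrow> real \<Rightarrow> real) \<Rightarrow> real list \<Rightarrow> 'i \<Rightarrow> 'a \<Rightarrow> nat \<Rightarrow> nat" where
  "increments N ts i \<omega> j =
     (if j < length ts then nat \<lfloor>N i \<omega> (ts ! j) - N i \<omega> (prev_time ts j)\<rfloor> else 0)"

definition increments_pmf :: "real list \<Rightarrow> (nat \<Rightarrow> nat) pmf" where
  "increments_pmf ts = Pi_pmf {..<length ts} 0 (\<lambda>j. poisson_pmf (ts ! j - prev_time ts j))"

context
  fixes M :: "'a measure" and I :: "'i set" and N :: "'i \<Rightarrow> 'a \<Rightarrow> real \<Rightarrow> real"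
    and ts :: "real list"
  assumes P: "prob_space M" and finI: "finite I" and NP: "indep_unit_poisson M I N"
    and ts_sorted: "sorted_wrt (<) ts" and ts_pos: "\<forall>t\<in>set ts. 0 < t"
begin

lemma prev_time_less: "j < length ts \<Longrightarrow> prev_time ts j < ts ! j"
  using ts_sorted ts_pos nth_mem[of 0 ts]
  by (cases j) (auto simp: prev_time_def sorted_wrt_iff_nth_less)

lemma prev_time_nonneg: "j < length ts \<Longrightarrow> 0 \<le> prev_time ts j"
  using ts_pos nth_mem[of "j - 1" ts] by (auto simp: prev_time_def less_imp_le)

lemma of_nat_increments:
  assumes "i \<in> I" "\<omega> \<in> space M" "j < length ts"
  shows "real (increments N ts i \<omega> j) = N i \<omega> (ts ! j) - N i \<omega> (prev_time ts j)"
proof -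
  have nat_valued: "\<forall>t\<ge>0. N i \<omega> t \<in> \<nat>" and mono: "mono_on {0..} (N i \<omega>)"
    using NP assms unfolding indep_unit_poisson_def by auto
  have t_pos: "0 < ts ! j" using ts_pos assms(3) by auto
  have "N i \<omega> (ts ! j) \<in> \<nat>" using nat_valued t_pos by simp
  then obtain a where a: "N i \<omega> (ts ! j) = real a" by (rule Nats_cases)
  have "N i \<omega> (prev_time ts j) \<in> \<nat>" using nat_valued prev_time_nonneg[OF assms(3)] by simp
  then obtain b where b: "N i \<omega> (prev_time ts j) = real b" by (rule Nats_cases)
  have "N i \<omega> (prev_time ts j) \<le> N i \<omega> (ts ! j)"
    using prev_time_nonneg[OF assms(3)] prev_time_less[OF assms(3)]
    by (intro mono_onD[OF mono]) auto
  thus ?thesis using assms(3) a b by (simp add: increments_def of_nat_diff)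
qed

definition increment_array :: "'a \<Rightarrow> 'i \<Rightarrow> nat \<Rightarrow> nat" where
  "increment_array \<omega> i = (if i \<in> I then increments N ts i \<omega> else (\<lambda>_. 0))"

definition supported_arrays :: "('i \<Rightarrow> nat \<Rightarrow> nat) set" where
  "supported_arrays = {c. \<forall>i j. \<not> (i \<in> I \<and> j < length ts) \<longrightarrow> c i j = 0}"

lemma increment_array_supported: "increment_array \<omega> \<in> supported_arrays"
  by (auto simp: increment_array_def supported_arrays_def increments_def)

lemma increment_array_vimage_singleton:
  assumes c: "c \<in> supported_arrays"
  shows "increment_array -` {c} \<inter> space M =
    {\<omega> \<in> space M. \<forall>i\<in>I. \<forall>j<length ts.
        N i \<omega> (ts ! j) - N i \<omega> (if j = 0 then 0 else ts ! (j - 1)) = real (c i j)}"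
proof -
  have "increment_array \<omega> = c \<longleftrightarrow> (\<forall>i\<in>I. \<forall>j<length ts.
          N i \<omega> (ts ! j) - N i \<omega> (if j = 0 then 0 else ts ! (j - 1)) = real (c i j))"
    if \<omega>: "\<omega> \<in> space M" for \<omega>
  proof -
    have "increment_array \<omega> = c \<longleftrightarrow> (\<forall>i\<in>I. \<forall>j<length ts. increments N ts i \<omega> j = c i j)"
    proof
      assume inc: "\<forall>i\<in>I. \<forall>j<length ts. increments N ts i \<omega> j = c i j"
      show "increment_array \<omega> = c"
      proof (intro ext)
        fix i j
        show "increment_array \<omega> i j = c i j"
          using c inc by (cases "i \<in> I \<and> j < length ts")
            (auto simp: increment_array_def supported_arrays_def increments_def)
      qed
    qed (auto simp: increment_array_def)
    also have "\<dots> \<longleftrightarrow> (\<forall>i\<in>I. \<forall>j<length ts. real (increments N ts i \<omega> j) = real (c i j))"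
      by simp
    also have "\<dots> \<longleftrightarrow> (\<forall>i\<in>I. \<forall>j<length ts.
          N i \<omega> (ts ! j) - N i \<omega> (if j = 0 then 0 else ts ! (j - 1)) = real (c i j))"
      using of_nat_increments[OF _ \<omega>] unfolding prev_time_def by simp
    finally show ?thesis .
  qed
  thus ?thesis by blast
qed

lemma increment_array_measurable: "increment_array \<in> measurable M (count_space UNIV)"
proof -
  have countable: "countable supported_arrays"
    unfolding supported_arrays_def by (rule countable_arrays_supported_on[OF finI])
  have [measurable]: "\<And>i t. i \<in> I \<Longrightarrow> (\<lambda>\<omega>. N i \<omega> t) \<in> borel_measurable M"
    using NP unfolding indep_unit_poisson_def by auto
  have "increment_array \<in> measurable M (count_space supported_arrays)"
  proof (subst measurable_count_space_eq_countable[OF countable], intro conjI ballI)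
    show "increment_array \<in> space M \<rightarrow> supported_arrays"
      using increment_array_supported by auto
    fix c assume c: "c \<in> supported_arrays"
    show "increment_array -` {c} \<inter> space M \<in> sets M"
      unfolding increment_array_vimage_singleton[OF c] using finI by measurable
  qed
  from measurable_compose[OF this measurable_count_space[of "\<lambda>x. x" supported_arrays]]
  show ?thesis by simp
qed

lemma distr_increment_array:
  "distr M (count_space UNIV) increment_array = measure_pmf (Pi_pmf I (\<lambda>_. 0) (\<lambda>_. increments_pmf ts))"
  (is "_ = measure_pmf ?Q")
proof (rule measure_eqI_countable_AE[where \<Omega> = supported_arrays])
  show "countable supported_arrays"
    unfolding supported_arrays_def by (rule countable_arrays_supported_on[OF finI])
  show "AE c in distr M (count_space UNIV) increment_array. c \<in> supported_arrays"
    by (subst AE_distr_iff[OF increment_array_measurable]) (auto simp: increment_array_supported)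
  show "AE c in measure_pmf ?Q. c \<in> supported_arrays"
  proof (rule AE_pmfI)
    fix c assume c: "c \<in> set_pmf ?Q"
    have "c i \<in> set_pmf (increments_pmf ts)" if "i \<in> I" for i
    proof -
      have "c i \<in> set_pmf (map_pmf (\<lambda>f. f i) ?Q)" using c by auto
      thus ?thesis by (simp add: Pi_pmf_component[OF finI] that)
    qed
    hence "\<forall>i\<in>I. \<forall>j. \<not> j < length ts \<longrightarrow> c i j = 0"
      using set_Pi_pmf_subset[of "{..<length ts}" 0] unfolding increments_pmf_def by fastforce
    moreover have "\<forall>i. i \<notin> I \<longrightarrow> c i = (\<lambda>_. 0)"
      using set_Pi_pmf_subset[OF finI, of "\<lambda>_. 0"] c by auto
    ultimately show "c \<in> supported_arrays"
      unfolding supported_arrays_def by auto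
  qed
  fix c assume c: "c \<in> supported_arrays"
  interpret prob_space M by (rule P)
  have "emeasure (distr M (count_space UNIV) increment_array) {c}
        = prob (increment_array -` {c} \<inter> space M)"
    by (subst emeasure_distr[OF increment_array_measurable]) (auto simp: emeasure_eq_measure)
  also have "prob (increment_array -` {c} \<inter> space M) =
      (\<Prod>i\<in>I. \<Prod>j<length ts. (let d = ts ! j - (if j = 0 then 0 else ts ! (j - 1)) in
              d ^ c i j / fact (c i j) * exp (- d)))"
    unfolding increment_array_vimage_singleton[OF c]
    using NP ts_sorted ts_pos unfolding indep_unit_poisson_def by blast
  also have "\<dots> = (\<Prod>i\<in>I. \<Prod>j<length ts. pmf (poisson_pmf (ts ! j - prev_time ts j)) (c i j))"
    using prev_time_less by (intro prod.cong refl) (simp add: prev_time_def Let_def)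
  also have "\<dots> = (\<Prod>i\<in>I. pmf (increments_pmf ts) (c i))"
    using c unfolding increments_pmf_def
    by (intro prod.cong refl, subst pmf_Pi) (auto simp: supported_arrays_def)
  also have "\<dots> = pmf ?Q c"
    using c by (subst pmf_Pi[OF finI]) (auto simp: supported_arrays_def fun_eq_iff)
  finally show "emeasure (distr M (count_space UNIV) increment_array) {c} = emeasure (measure_pmf ?Q) {c}"
    by (simp add: emeasure_pmf_single)
qed simp_all

lemma prob_increments:
  assumes i: "i \<in> I"
  shows "prob_space.prob M {\<omega>\<in>space M. increments N ts i \<omega> \<in> B} = measure_pmf.prob (increments_pmf ts) B"
proof -
  let ?Q = "Pi_pmf I (\<lambda>_. 0) (\<lambda>_. increments_pmf ts)"
  have "{\<omega>\<in>space M. increments N ts i \<omega> \<in> B} = increment_array -` {c. c i \<in> B} \<inter> space M"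
    using i by (auto simp: increment_array_def)
  hence "prob_space.prob M {\<omega>\<in>space M. increments N ts i \<omega> \<in> B}
        = measure (distr M (count_space UNIV) increment_array) {c. c i \<in> B}"
    by (simp add: measure_distr[OF increment_array_measurable])
  also have "\<dots> = measure_pmf.prob (map_pmf (\<lambda>f. f i) ?Q) B"
    by (simp add: distr_increment_array vimage_def)
  also have "map_pmf (\<lambda>f. f i) ?Q = increments_pmf ts"
    by (simp add: Pi_pmf_component[OF finI] i)
  finally show ?thesis .
qed

end

section \<open>A maximal inequality for Poisson processes\<close>

definition first_exit :: "'a measure \<Rightarrow> (nat \<Rightarrow> 'a \<Rightarrow> real) \<Rightarrow> real \<Rightarrow> nat \<Rightarrow> 'a set" where
  "first_exit M S c j = {\<omega>\<in>space M. (\<forall>k<j. \<bar>S k \<omega>\<bar> < c) \<and> c \<le> \<bar>S j \<omega>\<bar>}"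

lemma first_exit_disjoint: "disjoint_family (first_exit M S c)"
proof -
  have "first_exit M S c i \<inter> first_exit M S c j = {}" if "i < j" for i j
  proof -
    have "\<omega> \<notin> first_exit M S c j" if "\<omega> \<in> first_exit M S c i" for \<omega>
      using that \<open>i < j\<close> unfolding first_exit_def by force
    thus ?thesis by blast
  qed
  thus ?thesis
    unfolding disjoint_family_on_def by (metis Int_commute linorder_neqE_nat)
qed

lemma Union_first_exit:
  "(\<Union>j\<in>{..m}. first_exit M S c j) = {\<omega>\<in>space M. \<exists>k\<le>m. c \<le> \<bar>S k \<omega>\<bar>}"
proof (intro set_eqI iffI)
  fix \<omega> assume "\<omega> \<in> {\<omega>\<in>space M. \<exists>k\<le>m. c \<le> \<bar>S k \<omega>\<bar>}"
  then obtain k where \<omega>: "\<omega> \<in> space M" "k \<le> m" "c \<le> \<bar>S k \<omega>\<bar>" by auto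
  obtain j where j: "c \<le> \<bar>S j \<omega>\<bar>" "\<forall>l<j. \<not> c \<le> \<bar>S l \<omega>\<bar>"
    using \<omega>(3) exists_least_iff[of "\<lambda>j. c \<le> \<bar>S j \<omega>\<bar>"] by blast
  have "j \<le> k" using j \<omega> by (meson not_le)
  thus "\<omega> \<in> (\<Union>j\<in>{..m}. first_exit M S c j)"
    using j \<omega> by (auto simp: first_exit_def not_le intro!: bexI[of _ j])
qed (auto simp: first_exit_def)

text \<open>A Levy-Ottaviani type inequality: on the part of each first-exit event where the walk then
  moves by less than \<open>A\<close>, it still ends at distance at least \<open>A\<close> from \<open>0\<close>.\<close>
lemma (in prob_space) first_exit_maximal_ineq:
  assumes S[measurable]: "\<And>k. S k \<in> borel_measurable M"
    and half: "\<And>j. j \<le> m \<Longrightarrow> prob (first_exit M S (2*A) j)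
                 \<le> 2 * prob (first_exit M S (2*A) j \<inter> {\<omega>\<in>space M. \<bar>S m \<omega> - S j \<omega>\<bar> < A})"
  shows "prob {\<omega>\<in>space M. \<exists>k\<le>m. 2*A \<le> \<bar>S k \<omega>\<bar>} \<le> 2 * prob {\<omega>\<in>space M. A \<le> \<bar>S m \<omega>\<bar>}"
proof -
  let ?F = "first_exit M S (2*A)" and ?G = "\<lambda>j. {\<omega>\<in>space M. \<bar>S m \<omega> - S j \<omega>\<bar> < A}"
  have [measurable]: "?F j \<in> events" "?G j \<in> events" for j
    unfolding first_exit_def by measurable
  have "prob {\<omega>\<in>space M. \<exists>k\<le>m. 2*A \<le> \<bar>S k \<omega>\<bar>} = (\<Sum>j\<in>{..m}. prob (?F j))"
    unfolding Union_first_exit[symmetric]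
    by (rule finite_measure_finite_Union) (auto intro: disjoint_family_on_mono[OF _ first_exit_disjoint])
  also have "\<dots> \<le> (\<Sum>j\<in>{..m}. 2 * prob (?F j \<inter> ?G j))"
    by (intro sum_mono half) auto
  also have "\<dots> = 2 * prob (\<Union>j\<in>{..m}. ?F j \<inter> ?G j)"
  proof -
    have "disjoint_family (\<lambda>j. ?F j \<inter> ?G j)"
      using first_exit_disjoint[of M S "2*A"] unfolding disjoint_family_on_def by blast
    hence "prob (\<Union>j\<in>{..m}. ?F j \<inter> ?G j) = (\<Sum>j\<in>{..m}. prob (?F j \<inter> ?G j))"
      by (intro finite_measure_finite_Union) (auto intro: disjoint_family_on_mono)
    thus ?thesis by (simp add: sum_distrib_left)
  qed
  also have "\<dots> \<le> 2 * prob {\<omega>\<in>space M. A \<le> \<bar>S m \<omega>\<bar>}"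
  proof -
    have "(\<Union>j\<in>{..m}. ?F j \<inter> ?G j) \<subseteq> {\<omega>\<in>space M. A \<le> \<bar>S m \<omega>\<bar>}"
      unfolding first_exit_def by (force simp: abs_le_iff abs_less_iff)
    thus ?thesis by (intro mult_left_mono finite_measure_mono) auto
  qed
  finally show ?thesis .
qed

context
  fixes M :: "'a measure" and I :: "'i set" and N :: "'i \<Rightarrow> 'a \<Rightarrow> real \<Rightarrow> real"
    and i0 :: 'i and h :: real
  assumes P: "prob_space M" and finI: "finite I" and NP: "indep_unit_poisson M I N"
    and i0: "i0 \<in> I" and h: "0 < h"
begin

definition grid_walk :: "nat \<Rightarrow> 'a \<Rightarrow> real" where
  "grid_walk k \<omega> = N i0 \<omega> (real k * h) - real k * h"

lemma grid_walk_measurable[measurable]: "grid_walk k \<in> borel_measurable M"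
proof -
  have [measurable]: "(\<lambda>\<omega>. N i0 \<omega> t) \<in> borel_measurable M" for t
    using NP i0 unfolding indep_unit_poisson_def by auto
  show ?thesis unfolding grid_walk_def by measurable
qed

lemma grid_walk_0: "\<omega> \<in> space M \<Longrightarrow> grid_walk 0 \<omega> = 0"
  using NP i0 unfolding indep_unit_poisson_def grid_walk_def by auto

text \<open>With the observation times \<open>h, 2h, \<dots>, jh, mh\<close>, the first \<open>j\<close> increments determine the
  walk up to time \<open>j\<close> and the last one is the increment from \<open>jh\<close> to \<open>mh\<close>; so the two are
  independent.\<close>
definition grid_times :: "nat \<Rightarrow> nat \<Rightarrow> real list" where
  "grid_times j m = map (\<lambda>l. real (Suc l) * h) [0..<j] @ [real m * h]"

lemma grid_times_nth: "l \<le> j \<Longrightarrow> grid_times j m ! l = (if l < j then real (Suc l) * h else real m * h)"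
  by (auto simp: grid_times_def nth_append)

lemma length_grid_times: "length (grid_times j m) = Suc j"
  by (simp add: grid_times_def)

lemma prev_time_grid_times: "l \<le> j \<Longrightarrow> prev_time (grid_times j m) l = real l * h"
  using grid_times_nth[of "l - 1" j m] by (cases l) (auto simp: prev_time_def)

lemma grid_times_sorted_pos:
  assumes "j < m"
  shows "sorted_wrt (<) (grid_times j m)" "\<forall>t\<in>set (grid_times j m). 0 < t"
  unfolding sorted_wrt_iff_nth_less length_grid_times
  using assms h by (auto simp: grid_times_nth) (auto simp: grid_times_def)

lemma grid_walk_eq_increments:
  assumes jm: "j < m" and \<omega>: "\<omega> \<in> space M"
  shows "k \<le> j \<Longrightarrow> grid_walk k \<omega> = (\<Sum>l<k. real (increments N (grid_times j m) i0 \<omega> l)) - real k * h"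
    and "grid_walk m \<omega> - grid_walk j \<omega> = real (increments N (grid_times j m) i0 \<omega> j) - (real m - real j) * h"
proof -
  note inc = of_nat_increments[OF P finI NP grid_times_sorted_pos[OF jm] i0 \<omega>]
  assume "k \<le> j"
  hence "(\<Sum>l<k. real (increments N (grid_times j m) i0 \<omega> l))
         = (\<Sum>l<k. N i0 \<omega> (real (Suc l) * h) - N i0 \<omega> (real l * h))"
    using inc by (intro sum.cong) (auto simp: length_grid_times grid_times_nth prev_time_grid_times)
  also have "\<dots> = N i0 \<omega> (real k * h)"
    using sum_lessThan_telescope[of "\<lambda>l. N i0 \<omega> (real l * h)" k] grid_walk_0[OF \<omega>]
    by (simp add: grid_walk_def)
  finally show "grid_walk k \<omega> = (\<Sum>l<k. real (increments N (grid_times j m) i0 \<omega> l)) - real k * h"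
    by (simp add: grid_walk_def)
next
  show "grid_walk m \<omega> - grid_walk j \<omega> = real (increments N (grid_times j m) i0 \<omega> j) - (real m - real j) * h"
    using of_nat_increments[OF P finI NP grid_times_sorted_pos[OF jm] i0 \<omega>, of j]
    by (simp add: length_grid_times grid_times_nth prev_time_grid_times grid_walk_def algebra_simps)
qed

lemma prob_first_exit_inter_indep:
  assumes jm: "j < m"
  shows "prob_space.prob M (first_exit M grid_walk c j \<inter> {\<omega>\<in>space M. \<bar>grid_walk m \<omega> - grid_walk j \<omega>\<bar> < A})
       = prob_space.prob M (first_exit M grid_walk c j)
         * measure_pmf.prob (poisson_pmf ((real m - real j) * h)) {v. \<bar>real v - (real m - real j) * h\<bar> < A}"
proof -
  let ?ts = "grid_times j m"
  define R where "R c' = ((\<forall>k<j. \<bar>(\<Sum>l<k. real (c' l)) - real k * h\<bar> < c)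
                          \<and> c \<le> \<bar>(\<Sum>l<j. real (c' l)) - real j * h\<bar>)" for c' :: "nat \<Rightarrow> nat"
  define Q where "Q v = (\<bar>real v - (real m - real j) * h\<bar> < A)" for v :: nat
  have R_local: "R f = R g" if "\<forall>l\<in>{..<j}. f l = g l" for f g
  proof -
    have "(\<Sum>l<k. real (f l)) = (\<Sum>l<k. real (g l))" if "k \<le> j" for k
      using that \<open>\<forall>l\<in>{..<j}. f l = g l\<close> by (intro sum.cong) auto
    thus ?thesis unfolding R_def by (metis le_refl less_imp_le)
  qed
  have F: "first_exit M grid_walk c j = {\<omega>\<in>space M. increments N ?ts i0 \<omega> \<in> {c'. R c'}}"
    using grid_walk_eq_increments(1)[OF jm] by (auto simp: first_exit_def R_def)
  have FG: "first_exit M grid_walk c j \<inter> {\<omega>\<in>space M. \<bar>grid_walk m \<omega> - grid_walk j \<omega>\<bar> < A}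
            = {\<omega>\<in>space M. increments N ?ts i0 \<omega> \<in> {c'. R c' \<and> Q (c' j)}}"
    using F grid_walk_eq_increments(2)[OF jm] by (auto simp: Q_def)
  have pmf: "increments_pmf ?ts = Pi_pmf (insert j {..<j}) 0 (\<lambda>l. poisson_pmf (?ts ! l - prev_time ?ts l))"
    unfolding increments_pmf_def length_grid_times by (simp add: lessThan_Suc)
  have rate: "?ts ! j - prev_time ?ts j = (real m - real j) * h"
    by (simp add: grid_times_nth prev_time_grid_times algebra_simps)
  note law = prob_increments[OF P finI NP grid_times_sorted_pos[OF jm] i0]
  have "prob_space.prob M (first_exit M grid_walk c j \<inter> {\<omega>\<in>space M. \<bar>grid_walk m \<omega> - grid_walk j \<omega>\<bar> < A})
        = measure_pmf.prob (increments_pmf ?ts) {c'. R c' \<and> Q (c' j)}"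
    unfolding FG by (rule law)
  also have "\<dots> = measure_pmf.prob (increments_pmf ?ts) {c'. R c'}
                    * measure_pmf.prob (poisson_pmf (?ts ! j - prev_time ?ts j)) {v. Q v}"
    unfolding pmf by (rule measure_Pi_pmf_insert_indep) (simp_all add: R_local)
  also have "measure_pmf.prob (increments_pmf ?ts) {c'. R c'} = prob_space.prob M (first_exit M grid_walk c j)"
    unfolding F by (rule law[symmetric])
  finally show ?thesis by (simp add: rate Q_def)
qed

lemma prob_first_exit_le_twice:
  assumes "j \<le> m" and A: "0 < A" and small: "real m * h / A\<^sup>2 \<le> 1/2"
  shows "prob_space.prob M (first_exit M grid_walk c j)
         \<le> 2 * prob_space.prob M (first_exit M grid_walk c j \<inter> {\<omega>\<in>space M. \<bar>grid_walk m \<omega> - grid_walk j \<omega>\<bar> < A})"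
proof (cases "j = m")
  case True
  thus ?thesis using A measure_nonneg[of M] by (simp add: Int_absorb2 first_exit_def)
next
  case False
  let ?r = "(real m - real j) * h"
  have r: "0 < ?r" using False \<open>j \<le> m\<close> h by simp
  have "?r / A\<^sup>2 \<le> real m * h / A\<^sup>2" using h A by (simp add: divide_right_mono)
  hence "1/2 \<le> measure_pmf.prob (poisson_pmf ?r) {v. \<bar>real v - ?r\<bar> < A}"
    using small by (intro poisson_pmf_concentration[OF r A]) linarith
  hence "prob_space.prob M (first_exit M grid_walk c j) * (1/2)
         \<le> prob_space.prob M (first_exit M grid_walk c j) * measure_pmf.prob (poisson_pmf ?r) {v. \<bar>real v - ?r\<bar> < A}"
    by (intro mult_left_mono) auto
  thus ?thesis
    using prob_first_exit_inter_indep[of j m c A] False \<open>j \<le> m\<close> by simp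
qed

lemma poisson_grid_maximal_ineq:
  assumes A: "0 < A" and m: "1 \<le> m" and small: "real m * h / A\<^sup>2 \<le> 1/2"
  shows "prob_space.prob M {\<omega>\<in>space M. \<exists>k\<le>m. 2*A \<le> \<bar>N i0 \<omega> (real k * h) - real k * h\<bar>}
           \<le> 2 * (real m * h / A\<^sup>2)"
proof -
  interpret prob_space M by (rule P)
  have mh: "0 < real m * h" using m h by simp
  have "prob {\<omega>\<in>space M. \<exists>k\<le>m. 2*A \<le> \<bar>grid_walk k \<omega>\<bar>} \<le> 2 * prob {\<omega>\<in>space M. A \<le> \<bar>grid_walk m \<omega>\<bar>}"
    by (intro first_exit_maximal_ineq grid_walk_measurable prob_first_exit_le_twice A small)
  also have "prob {\<omega>\<in>space M. A \<le> \<bar>grid_walk m \<omega>\<bar>} \<le> real m * h / A\<^sup>2"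
  proof -
    define ts where "ts = [real m * h]"
    have sorted: "sorted_wrt (<) ts" and pos: "\<forall>t\<in>set ts. 0 < t" using mh by (auto simp: ts_def)
    have "{\<omega>\<in>space M. A \<le> \<bar>grid_walk m \<omega>\<bar>}
          = {\<omega>\<in>space M. increments N ts i0 \<omega> \<in> {c. A \<le> \<bar>real (c 0) - real m * h\<bar>}}"
      using of_nat_increments[OF P finI NP sorted pos i0, of _ 0] grid_walk_0
      by (auto simp: grid_walk_def ts_def prev_time_def)
    also have "prob \<dots> = measure_pmf.prob (map_pmf (\<lambda>c. c 0) (increments_pmf ts))
                                {v. A \<le> \<bar>real v - real m * h\<bar>}"
      unfolding prob_increments[OF P finI NP sorted pos i0] by (simp add: vimage_def)
    also have "map_pmf (\<lambda>c. c 0) (increments_pmf ts) = poisson_pmf (real m * h)"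
      unfolding increments_pmf_def by (simp add: Pi_pmf_component ts_def prev_time_def)
    finally show ?thesis using poisson_pmf_chebyshev[OF mh A] by simp
  qed
  finally show ?thesis by (simp add: grid_walk_def)
qed

end

section \<open>Piecewise constant paths\<close>

lemma pw_const_cadlag_right_const:
  assumes "pw_const_cadlag f" "0 \<le> t"
  obtains e where "e > 0" "\<And>s. t \<le> s \<Longrightarrow> s < t + e \<Longrightarrow> f s = f t"
proof -
  have "\<exists>e>0. \<forall>s. t \<le> s \<and> s < t + e \<longrightarrow> f s = f t"
    using assms unfolding pw_const_cadlag_def by simp
  thus ?thesis using that by auto
qed

lemma pw_const_cadlag_comp:
  assumes f: "pw_const_cadlag f"
  shows "pw_const_cadlag (\<lambda>t. g (f t))"
  unfolding pw_const_cadlag_def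
proof (intro allI impI conjI)
  fix t :: real assume t: "0 \<le> t"
  obtain e where "e > 0" "\<And>s. t \<le> s \<Longrightarrow> s < t + e \<Longrightarrow> f s = f t"
    using pw_const_cadlag_right_const[OF f t] by blast
  thus "\<exists>e>0. \<forall>s. t \<le> s \<and> s < t + e \<longrightarrow> g (f s) = g (f t)" by metis
  assume "0 < t"
  hence "\<exists>e>0. \<exists>c. \<forall>s. t - e < s \<and> s < t \<longrightarrow> f s = c"
    using f t unfolding pw_const_cadlag_def by simp
  then obtain e c where "e > 0" "\<forall>s. t - e < s \<and> s < t \<longrightarrow> f s = c" by blast
  thus "\<exists>e>0. \<exists>c. \<forall>s. t - e < s \<and> s < t \<longrightarrow> g (f s) = c" by metis
qed

lemma ceiling_dyadic_bounds:
  fixes \<tau> :: real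
  shows "\<tau> \<le> real_of_int \<lceil>\<tau> * 2^K\<rceil> / 2^K" "real_of_int \<lceil>\<tau> * 2^K\<rceil> / 2^K < \<tau> + (1/2)^K"
proof -
  have c: "real_of_int \<lceil>\<tau> * 2^K\<rceil> - 1 < \<tau> * 2^K" "\<tau> * 2^K \<le> real_of_int \<lceil>\<tau> * 2^K\<rceil>"
    using ceiling_correct[of "\<tau> * 2^K"] by auto
  show "\<tau> \<le> real_of_int \<lceil>\<tau> * 2^K\<rceil> / 2^K" using c(2) by (simp add: field_simps)
  show "real_of_int \<lceil>\<tau> * 2^K\<rceil> / 2^K < \<tau> + (1/2)^K"
    using c(1) by (simp add: field_simps power_one_over)
qed

lemma pw_const_cadlag_eventually_dyadic:
  assumes "pw_const_cadlag f" "0 \<le> \<tau>"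
  shows "eventually (\<lambda>K. f (real_of_int \<lceil>\<tau> * 2^K\<rceil> / 2^K) = f \<tau>) sequentially"
proof -
  obtain e where e: "e > 0" "\<And>s. \<tau> \<le> s \<Longrightarrow> s < \<tau> + e \<Longrightarrow> f s = f \<tau>"
    using pw_const_cadlag_right_const[OF assms] by blast
  obtain K0 where K0: "(1/2::real)^K0 < e" using real_arch_pow_inv[OF e(1), of "1/2"] by auto
  show ?thesis unfolding eventually_sequentially
  proof (intro exI allI impI)
    fix K assume "K0 \<le> K"
    hence "(1/2::real)^K \<le> (1/2)^K0" by (intro power_decreasing) auto
    thus "f (real_of_int \<lceil>\<tau> * 2^K\<rceil> / 2^K) = f \<tau>"
      using ceiling_dyadic_bounds[of \<tau> K] K0 by (intro e(2)) linarith+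
  qed
qed

text \<open>Right-continuous step paths are limits of their values at dyadic points to the right,
  which is what makes them jointly measurable in \<open>(\<omega>, t)\<close>.\<close>
lemma pw_const_cadlag_joint_measurable:
  fixes F :: "'a \<Rightarrow> real \<Rightarrow> real"
  assumes Fm: "\<And>t. (\<lambda>\<omega>. F \<omega> t) \<in> borel_measurable M"
    and Fpw: "\<And>\<omega>. \<omega> \<in> space M \<Longrightarrow> pw_const_cadlag (F \<omega>)"
  shows "(\<lambda>x. F (fst x) (max 0 (snd x))) \<in> borel_measurable (M \<Otimes>\<^sub>M lborel)"
proof (rule borel_measurable_LIMSEQ_real)
  let ?A = "\<lambda>K x. F (fst x) (real_of_int \<lceil>max 0 (snd x) * (2::real)^K\<rceil> / 2^K)"
  show "?A K \<in> borel_measurable (M \<Otimes>\<^sub>M lborel)" for K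
  proof (rule measurable_compose_countable[where f = "\<lambda>z x. F (fst x) (real_of_int z / 2^K)"
        and g = "\<lambda>x. \<lceil>max 0 (snd x) * (2::real)^K\<rceil>"])
    show "(\<lambda>x. F (fst x) (real_of_int z / 2 ^ K)) \<in> borel_measurable (M \<Otimes>\<^sub>M lborel)" for z
      by (rule measurable_compose[OF measurable_fst Fm])
    show "(\<lambda>x. \<lceil>max 0 (snd x) * (2::real) ^ K\<rceil>) \<in> M \<Otimes>\<^sub>M lborel \<rightarrow>\<^sub>M count_space UNIV"
      by measurable
  qed
  fix x :: "'a \<times> real" assume "x \<in> space (M \<Otimes>\<^sub>M lborel)"
  hence "fst x \<in> space M" by (auto simp: space_pair_measure)
  hence "eventually (\<lambda>K. ?A K x = F (fst x) (max 0 (snd x))) sequentially"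
    using pw_const_cadlag_eventually_dyadic[OF Fpw, of "fst x" "max 0 (snd x)"] by simp
  thus "(\<lambda>K. ?A K x) \<longlonglongrightarrow> F (fst x) (max 0 (snd x))"
    by (rule tendsto_eventually)
qed

lemma pw_const_cadlag_borel_measurable:
  fixes f :: "real \<Rightarrow> real"
  assumes "pw_const_cadlag f"
  shows "(\<lambda>\<tau>. f (max 0 \<tau>)) \<in> borel_measurable lborel"
proof -
  have "(\<lambda>x. f (max 0 (snd x))) \<in> borel_measurable (count_space (UNIV :: unit set) \<Otimes>\<^sub>M lborel)"
    using pw_const_cadlag_joint_measurable[where F = "\<lambda>_. f"] assms by simp
  from measurable_Pair2[OF this, of "()"] show ?thesis by simp
qed

lemma bounded_measurable_integrable_on:
  fixes f :: "real \<Rightarrow> real"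
  assumes fm: "(\<lambda>\<tau>. f (max 0 \<tau>)) \<in> borel_measurable lborel"
    and bnd: "\<And>\<tau>. 0 \<le> \<tau> \<Longrightarrow> \<bar>f \<tau>\<bar> \<le> B" and t: "0 \<le> t"
  shows "f integrable_on {0..t}"
    and "integral {0..t} f = (LINT \<tau>:{0..t}|lborel. f (max 0 \<tau>))"
proof -
  have si: "set_integrable lborel {0..t} (\<lambda>\<tau>. f (max 0 \<tau>))"
    unfolding set_integrable_def
  proof (rule integrableI_bounded_set_indicator[where B = B])
    show "AE x in lborel. x \<in> {0..t} \<longrightarrow> norm (f (max 0 x)) \<le> B"
      using bnd by (intro AE_I2) simp
  qed (use fm t in simp_all)
  have eq: "f (max 0 \<tau>) = f \<tau>" if "\<tau> \<in> {0..t}" for \<tau>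
    using that by simp
  have "(\<lambda>\<tau>. f (max 0 \<tau>)) integrable_on {0..t}"
    by (rule set_borel_integral_eq_integral(1)[OF si])
  thus "f integrable_on {0..t}"
    by (subst (asm) Henstock_Kurzweil_Integration.integrable_cong[OF eq])
  have "integral {0..t} f = integral {0..t} (\<lambda>\<tau>. f (max 0 \<tau>))"
    by (rule Henstock_Kurzweil_Integration.integral_cong[OF eq, symmetric])
  also have "\<dots> = (LINT \<tau>:{0..t}|lborel. f (max 0 \<tau>))"
    by (rule set_borel_integral_eq_integral(2)[OF si, symmetric])
  finally show "integral {0..t} f = (LINT \<tau>:{0..t}|lborel. f (max 0 \<tau>))" .
qed

lemma pw_const_cadlag_integrable_on:
  fixes f :: "real \<Rightarrow> real"
  assumes "pw_const_cadlag f" "\<And>\<tau>. 0 \<le> \<tau> \<Longrightarrow> \<bar>f \<tau>\<bar> \<le> B" "0 \<le> t"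
  shows "f integrable_on {0..t}"
  by (rule bounded_measurable_integrable_on(1)[OF pw_const_cadlag_borel_measurable[OF assms(1)] assms(2,3)])

lemma borel_measurable_integral_pw_const_cadlag:
  fixes F :: "'a \<Rightarrow> real \<Rightarrow> real"
  assumes Fm: "\<And>t. (\<lambda>\<omega>. F \<omega> t) \<in> borel_measurable M"
    and Fpw: "\<And>\<omega>. \<omega> \<in> space M \<Longrightarrow> pw_const_cadlag (F \<omega>)"
    and bnd: "\<And>\<omega> \<tau>. \<omega> \<in> space M \<Longrightarrow> 0 \<le> \<tau> \<Longrightarrow> \<bar>F \<omega> \<tau>\<bar> \<le> B"
    and t: "0 \<le> t"
  shows "(\<lambda>\<omega>. integral {0..t} (F \<omega>)) \<in> borel_measurable M"
proof -
  have [measurable]: "(\<lambda>x. F (fst x) (max 0 (snd x))) \<in> borel_measurable (M \<Otimes>\<^sub>M lborel)"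
    by (rule pw_const_cadlag_joint_measurable[OF Fm Fpw])
  have "(\<lambda>\<omega>. LINT \<tau>:{0..t}|lborel. F \<omega> (max 0 \<tau>)) \<in> borel_measurable M"
    unfolding set_lebesgue_integral_def
  proof (rule lborel.borel_measurable_lebesgue_integral)
    have "(\<lambda>x. indicator {0..t} (snd x) *\<^sub>R F (fst x) (max 0 (snd x))) \<in> borel_measurable (M \<Otimes>\<^sub>M lborel)"
      by measurable
    thus "(\<lambda>(x, y). indicat_real {0..t} y *\<^sub>R F x (max 0 y)) \<in> borel_measurable (M \<Otimes>\<^sub>M lborel)"
      by (simp add: case_prod_beta')
  qed
  moreover have "integral {0..t} (F \<omega>) = (LINT \<tau>:{0..t}|lborel. F \<omega> (max 0 \<tau>))"
    if "\<omega> \<in> space M" for \<omega>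
    using pw_const_cadlag_borel_measurable[OF Fpw] bnd that t
    by (intro bounded_measurable_integrable_on(2)) auto
  ultimately show ?thesis by (subst measurable_cong) auto
qed

lemma pw_const_cadlag_comp_continuous_at_right:
  fixes f :: "real \<Rightarrow> real"
  assumes g: "pw_const_cadlag g" and f: "continuous (at_right t) f"
    and f_mono: "\<And>s. t < s \<Longrightarrow> f t \<le> f s" and f_nonneg: "0 \<le> f t"
  shows "continuous (at_right t) (\<lambda>s. g (f s))"
proof -
  obtain e where e: "e > 0" "\<And>y. f t \<le> y \<Longrightarrow> y < f t + e \<Longrightarrow> g y = g (f t)"
    using pw_const_cadlag_right_const[OF g f_nonneg] by blast
  have "eventually (\<lambda>s. f s < f t + e) (at_right t)"
    using f e(1) unfolding continuous_within by (intro order_tendstoD(2)) auto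
  hence "eventually (\<lambda>s. g (f s) = g (f t)) (at_right t)"
    using eventually_at_right_less[of t] by eventually_elim (simp add: e(2) f_mono)
  thus ?thesis
    unfolding continuous_within by (rule tendsto_eventually)
qed

lemma SUP_Icc_eq_SUP_rationals:
  fixes \<phi> :: "real \<Rightarrow> real"
  assumes T: "0 \<le> T" and bdd: "bdd_above (\<phi> ` {0..T})"
    and rc: "\<And>t. 0 \<le> t \<Longrightarrow> t < T \<Longrightarrow> continuous (at_right t) \<phi>"
  shows "(SUP t\<in>{0..T}. \<phi> t) = (SUP t\<in>({0..T} \<inter> \<rat>) \<union> {T}. \<phi> t)"
proof (rule antisym)
  let ?D = "({0..T} \<inter> \<rat>) \<union> {T}"
  have bD: "bdd_above (\<phi> ` ?D)"
    using T by (intro bdd_above_mono[OF bdd]) auto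
  show "(SUP t\<in>{0..T}. \<phi> t) \<le> (SUP t\<in>?D. \<phi> t)"
  proof (rule cSUP_least)
    fix t assume t: "t \<in> {0..T}"
    show "\<phi> t \<le> (SUP t\<in>?D. \<phi> t)"
    proof (cases "t = T")
      case True thus ?thesis using bD by (intro cSUP_upper) auto
    next
      case False
      hence t: "0 \<le> t" "t < T" using t by auto
      show ?thesis
      proof (rule ccontr)
        assume "\<not> \<phi> t \<le> (SUP t\<in>?D. \<phi> t)"
        hence "eventually (\<lambda>s. (SUP t\<in>?D. \<phi> t) < \<phi> s) (at_right t)"
          using rc[OF t] unfolding continuous_within by (intro order_tendstoD(1)) auto
        then obtain b where b: "t < b" "\<And>s. t < s \<Longrightarrow> s < b \<Longrightarrow> (SUP t\<in>?D. \<phi> t) < \<phi> s"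
          unfolding eventually_at_right_field by blast
        obtain q where q: "q \<in> \<rat>" "t < q" "q < min b T"
          using Rats_dense_in_real[of t "min b T"] t b by auto
        have "\<phi> q \<le> (SUP t\<in>?D. \<phi> t)" using bD q t by (intro cSUP_upper) auto
        thus False using b(2)[of q] q by simp
      qed
    qed
  qed (use T in simp)
  show "(SUP t\<in>?D. \<phi> t) \<le> (SUP t\<in>{0..T}. \<phi> t)"
    by (rule cSUP_subset_mono) (use T bdd in auto)
qed

lemma borel_measurable_SUP_continuous_at_right:
  fixes \<phi> :: "'a \<Rightarrow> real \<Rightarrow> real"
  assumes T: "0 \<le> T"
    and meas: "\<And>t. 0 \<le> t \<Longrightarrow> (\<lambda>\<omega>. \<phi> \<omega> t) \<in> borel_measurable M"
    and bdd: "\<And>\<omega>. \<omega> \<in> space M \<Longrightarrow> bdd_above (\<phi> \<omega> ` {0..T})"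
    and rc: "\<And>\<omega> t. \<omega> \<in> space M \<Longrightarrow> 0 \<le> t \<Longrightarrow> t < T \<Longrightarrow> continuous (at_right t) (\<phi> \<omega>)"
  shows "(\<lambda>\<omega>. SUP t\<in>{0..T}. \<phi> \<omega> t) \<in> borel_measurable M"
proof -
  let ?D = "({0..T} \<inter> \<rat>) \<union> {T}"
  have "countable ?D" using countable_rat by (intro countable_Un countable_Int2) auto
  hence "(\<lambda>\<omega>. SUP t\<in>?D. \<phi> \<omega> t) \<in> borel_measurable M"
    using T by (intro borel_measurable_cSUP meas bdd_above_mono[OF bdd]) auto
  moreover have "(SUP t\<in>{0..T}. \<phi> \<omega> t) = (SUP t\<in>?D. \<phi> \<omega> t)" if "\<omega> \<in> space M" for \<omega>
    using that by (intro SUP_Icc_eq_SUP_rationals T bdd rc)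
  ultimately show ?thesis by (subst measurable_cong) auto
qed

section \<open>Cumulative flip rates and pathwise bounds\<close>

lemma rfun_bounds: "0 \<le> rfun \<beta> x" "rfun \<beta> x \<le> 1"
  by (auto simp: rfun_def add_pos_pos)

lemma rfun_borel_measurable[measurable]: "rfun \<beta> \<in> borel_measurable borel"
  unfolding rfun_def by (cases "\<beta> = \<infinity>") simp_all

lemma card_comm: "card (comm V1 V2 k) = csize V1 V2 k"
  by (simp add: comm_def csize_def)

lemma comm_subset_nodes: "comm V1 V2 k \<subseteq> nodes V1 V2"
  by (auto simp: comm_def nodes_def)

definition rate_sum :: "nat \<Rightarrow> nat \<Rightarrow> real \<Rightarrow> ereal \<Rightarrow> (nat \<Rightarrow> nat \<Rightarrow> bool) \<Rightarrow> (real \<Rightarrow> nat \<Rightarrow> real)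
                      \<Rightarrow> nat \<Rightarrow> bool \<Rightarrow> real \<Rightarrow> real" where
  "rate_sum V1 V2 al \<beta> g s k sg \<tau> = (\<Sum>u\<in>comm V1 V2 k.
        if s \<tau> u = (if sg then 1 else -1) then frate V1 V2 al \<beta> g s \<tau> u else 0)"

definition signed_rate_sum :: "nat \<Rightarrow> nat \<Rightarrow> real \<Rightarrow> ereal \<Rightarrow> (nat \<Rightarrow> nat \<Rightarrow> bool) \<Rightarrow> (real \<Rightarrow> nat \<Rightarrow> real)
                      \<Rightarrow> nat \<Rightarrow> real \<Rightarrow> real" where
  "signed_rate_sum V1 V2 al \<beta> g s k \<tau> = (\<Sum>u\<in>comm V1 V2 k. s \<tau> u * frate V1 V2 al \<beta> g s \<tau> u)"

lemma icum_eq_integral_rate_sum: "icum V1 V2 al \<beta> g s k sg t = integral {0..t} (rate_sum V1 V2 al \<beta> g s k sg)"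
  unfolding icum_def rate_sum_def by simp

lemma Mproc_eq_integral_signed_rate_sum:
  "Mproc V1 V2 al \<beta> g s Np k t =
     Np k True (icum V1 V2 al \<beta> g s k False t) - Np k False (icum V1 V2 al \<beta> g s k True t)
     + integral {0..t} (signed_rate_sum V1 V2 al \<beta> g s k)"
  unfolding Mproc_def signed_rate_sum_def by simp

lemma rate_sum_bounds:
  "0 \<le> rate_sum V1 V2 al \<beta> g s k sg \<tau>" "rate_sum V1 V2 al \<beta> g s k sg \<tau> \<le> real (csize V1 V2 k)"
proof -
  show "0 \<le> rate_sum V1 V2 al \<beta> g s k sg \<tau>"
    unfolding rate_sum_def frate_def by (intro sum_nonneg) (simp add: rfun_bounds)
  have "rate_sum V1 V2 al \<beta> g s k sg \<tau> \<le> (\<Sum>u\<in>comm V1 V2 k. 1)"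
    unfolding rate_sum_def frate_def by (intro sum_mono) (simp add: rfun_bounds)
  thus "rate_sum V1 V2 al \<beta> g s k sg \<tau> \<le> real (csize V1 V2 k)"
    by (simp add: card_comm)
qed

lemma signed_rate_sum_eq_diff:
  assumes "\<forall>u\<in>nodes V1 V2. s \<tau> u = 1 \<or> s \<tau> u = -1"
  shows "signed_rate_sum V1 V2 al \<beta> g s k \<tau> = rate_sum V1 V2 al \<beta> g s k True \<tau> - rate_sum V1 V2 al \<beta> g s k False \<tau>"
proof -
  have "s \<tau> u * frate V1 V2 al \<beta> g s \<tau> u
        = (if s \<tau> u = 1 then frate V1 V2 al \<beta> g s \<tau> u else 0)
          - (if s \<tau> u = -1 then frate V1 V2 al \<beta> g s \<tau> u else 0)" if "u \<in> comm V1 V2 k" for u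
    using assms comm_subset_nodes that by fastforce
  thus ?thesis
    unfolding signed_rate_sum_def rate_sum_def by (simp add: sum_subtractf)
qed

lemma abs_signed_rate_sum_le:
  assumes "\<forall>u\<in>nodes V1 V2. s \<tau> u = 1 \<or> s \<tau> u = -1"
  shows "\<bar>signed_rate_sum V1 V2 al \<beta> g s k \<tau>\<bar> \<le> real (csize V1 V2 k)"
  using rate_sum_bounds[of V1 V2 al \<beta> g s k True \<tau>] rate_sum_bounds[of V1 V2 al \<beta> g s k False \<tau>]
    signed_rate_sum_eq_diff[of V1 V2 s \<tau> al \<beta> g k, OF assms]
  by (simp add: abs_le_iff)

lemma pw_const_cadlag_rate_sum:
  "pw_const_cadlag s \<Longrightarrow> pw_const_cadlag (rate_sum V1 V2 al \<beta> g s k sg)"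
  unfolding rate_sum_def frate_def
  by (rule pw_const_cadlag_comp[where g = "\<lambda>x. \<Sum>u\<in>comm V1 V2 k.
        if x u = (if sg then 1 else -1) then rfun \<beta> (Delta V1 V2 g al x u) else 0"])

lemma pw_const_cadlag_signed_rate_sum:
  "pw_const_cadlag s \<Longrightarrow> pw_const_cadlag (signed_rate_sum V1 V2 al \<beta> g s k)"
  unfolding signed_rate_sum_def frate_def
  by (rule pw_const_cadlag_comp[where g = "\<lambda>x. \<Sum>u\<in>comm V1 V2 k. x u * rfun \<beta> (Delta V1 V2 g al x u)"])

lemma rate_sum_integrable_on:
  assumes "pw_const_cadlag s" "0 \<le> t"
  shows "rate_sum V1 V2 al \<beta> g s k sg integrable_on {0..t}"
  using rate_sum_bounds
  by (intro pw_const_cadlag_integrable_on[OF pw_const_cadlag_rate_sum[OF assms(1)] _ assms(2),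
        where B = "real (csize V1 V2 k)"]) auto

context
  fixes s :: "real \<Rightarrow> nat \<Rightarrow> real"
  assumes spw: "pw_const_cadlag s"
begin

lemma icum_bounds:
  assumes "0 \<le> t"
  shows "0 \<le> icum V1 V2 al \<beta> g s k sg t" "icum V1 V2 al \<beta> g s k sg t \<le> real (csize V1 V2 k) * t"
proof -
  note int = rate_sum_integrable_on[OF spw assms, of V1 V2 al \<beta> g k sg]
  show "0 \<le> icum V1 V2 al \<beta> g s k sg t"
    unfolding icum_eq_integral_rate_sum by (rule integral_nonneg[OF int]) (simp add: rate_sum_bounds)
  have "icum V1 V2 al \<beta> g s k sg t \<le> integral {0..t} (\<lambda>_. real (csize V1 V2 k))"
    unfolding icum_eq_integral_rate_sum by (rule integral_le[OF int]) (auto simp: rate_sum_bounds)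
  thus "icum V1 V2 al \<beta> g s k sg t \<le> real (csize V1 V2 k) * t"
    using assms by (simp add: mult.commute)
qed

lemma icum_mono:
  assumes "0 \<le> t" "t \<le> t'"
  shows "icum V1 V2 al \<beta> g s k sg t \<le> icum V1 V2 al \<beta> g s k sg t'"
  unfolding icum_eq_integral_rate_sum
  using assms rate_sum_integrable_on[OF spw] rate_sum_bounds
  by (intro integral_subset_le) auto

lemma icum_continuous_at_right:
  assumes "0 \<le> t"
  shows "continuous (at_right t) (icum V1 V2 al \<beta> g s k sg)"
proof -
  have "continuous_on {t..t+1} (icum V1 V2 al \<beta> g s k sg)"
    proof (rule continuous_on_subset)
    show "continuous_on {0..t+1} (icum V1 V2 al \<beta> g s k sg)"
      unfolding icum_eq_integral_rate_sum[abs_def] using assms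
      by (intro indefinite_integral_continuous_1 rate_sum_integrable_on[OF spw]) simp
  qed (use assms in auto)
  hence "(icum V1 V2 al \<beta> g s k sg \<longlongrightarrow> icum V1 V2 al \<beta> g s k sg t) (at t within {t..t+1})"
    unfolding continuous_on_def by simp
  thus ?thesis
    by (simp add: continuous_within at_within_Icc_at_right)
qed

lemma integral_signed_rate_sum:
  assumes "0 \<le> t" and sval: "\<forall>\<tau>\<ge>0. \<forall>u\<in>nodes V1 V2. s \<tau> u = 1 \<or> s \<tau> u = -1"
  shows "integral {0..t} (signed_rate_sum V1 V2 al \<beta> g s k) = icum V1 V2 al \<beta> g s k True t - icum V1 V2 al \<beta> g s k False t"
proof -
  have "integral {0..t} (signed_rate_sum V1 V2 al \<beta> g s k)
      = integral {0..t} (\<lambda>\<tau>. rate_sum V1 V2 al \<beta> g s k True \<tau> - rate_sum V1 V2 al \<beta> g s k False \<tau>)"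
    using sval signed_rate_sum_eq_diff by (intro Henstock_Kurzweil_Integration.integral_cong) auto
  also have "\<dots> = integral {0..t} (rate_sum V1 V2 al \<beta> g s k True) - integral {0..t} (rate_sum V1 V2 al \<beta> g s k False)"
    by (intro integral_diff rate_sum_integrable_on[OF spw assms(1)])
  finally show ?thesis by (simp add: icum_eq_integral_rate_sum)
qed

end

lemma mono_grid_deviation_bound:
  fixes f :: "real \<Rightarrow> real"
  assumes mono: "mono_on {0..} f" and h: "0 < h" and x: "0 \<le> x" "x \<le> real m * h"
    and grid: "\<forall>j\<le>m. \<bar>f (real j * h) - real j * h\<bar> < B"
  shows "\<bar>f x - x\<bar> \<le> B + h"
proof -
  define j where "j = nat \<lfloor>x / h\<rfloor>"
  have "real j \<le> x / h" "x / h < real j + 1"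
    using x h by (simp_all add: j_def)
  hence lo: "real j * h \<le> x" and hi: "x < real (Suc j) * h"
    using h by (simp_all add: field_simps)
  show ?thesis
  proof (cases "j < m")
    case True
    have "f (real j * h) \<le> f x"
      by (rule mono_onD[OF mono]) (use lo h x in auto)
    moreover have "f x \<le> f (real (Suc j) * h)"
      by (rule mono_onD[OF mono]) (use hi x h in auto)
    moreover have "\<bar>f (real j * h) - real j * h\<bar> < B" "\<bar>f (real (Suc j) * h) - real (Suc j) * h\<bar> < B"
      using grid True Suc_leI[OF True] by (simp del: of_nat_Suc)+
    ultimately show ?thesis
      using lo hi by (simp add: abs_le_iff abs_less_iff algebra_simps)
  next
    case False
    hence "real m * h \<le> real j * h" using h by simp
    hence "x = real m * h" using lo x by linarith
    thus ?thesis using grid h by force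
  qed
qed

context
  fixes V1 V2 :: nat and al :: real and \<beta> :: ereal and g :: "nat \<Rightarrow> nat \<Rightarrow> bool"
    and s :: "real \<Rightarrow> nat \<Rightarrow> real" and Np :: "nat \<Rightarrow> bool \<Rightarrow> real \<Rightarrow> real" and k :: nat
  assumes spw: "pw_const_cadlag s"
    and sval: "\<forall>\<tau>\<ge>0. \<forall>u\<in>nodes V1 V2. s \<tau> u = 1 \<or> s \<tau> u = -1"
    and Np_mono: "\<And>b. mono_on {0..} (Np k b)"
    and Np_nonneg: "\<And>b x. 0 \<le> x \<Longrightarrow> 0 \<le> Np k b x"
    and Np_pw: "\<And>b. pw_const_cadlag (Np k b)"
begin

lemma Mproc_eq_compensated:
  assumes "0 \<le> t"
  shows "Mproc V1 V2 al \<beta> g s Np k t =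
    (Np k True (icum V1 V2 al \<beta> g s k False t) - icum V1 V2 al \<beta> g s k False t)
    - (Np k False (icum V1 V2 al \<beta> g s k True t) - icum V1 V2 al \<beta> g s k True t)"
  unfolding Mproc_eq_integral_signed_rate_sum integral_signed_rate_sum[OF spw assms sval] by simp

lemma abs_Mproc_le_grid_deviation:
  assumes h: "0 < h" and mh: "real m * h = real (csize V1 V2 k) * T"
    and t: "0 \<le> t" "t \<le> T"
    and grid: "\<And>b. \<forall>j\<le>m. \<bar>Np k b (real j * h) - real j * h\<bar> < B"
  shows "\<bar>Mproc V1 V2 al \<beta> g s Np k t\<bar> \<le> 2 * (B + h)"
proof -
  have bound: "\<bar>Np k b (icum V1 V2 al \<beta> g s k b' t) - icum V1 V2 al \<beta> g s k b' t\<bar> \<le> B + h" for b b'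
  proof (rule mono_grid_deviation_bound[OF Np_mono h icum_bounds(1)[OF spw t(1)] _ grid])
    have "real (csize V1 V2 k) * t \<le> real (csize V1 V2 k) * T"
      using t by (intro mult_left_mono) auto
    thus "icum V1 V2 al \<beta> g s k b' t \<le> real m * h"
      using icum_bounds(2)[OF spw t(1)] mh by (metis order_trans)
  qed
  show ?thesis
    unfolding Mproc_eq_compensated[OF t(1)] using bound[of True False] bound[of False True] by (smt (verit))
qed

lemma abs_Mproc_le:
  assumes t: "0 \<le> t" "t \<le> T"
  shows "\<bar>Mproc V1 V2 al \<beta> g s Np k t\<bar> \<le>
     Np k True (real (csize V1 V2 k) * T) + Np k False (real (csize V1 V2 k) * T) + 2 * (real (csize V1 V2 k) * T)"
proof -
  have bound: "\<bar>Np k b (icum V1 V2 al \<beta> g s k b' t) - icum V1 V2 al \<beta> g s k b' t\<bar>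
      \<le> Np k b (real (csize V1 V2 k) * T) + real (csize V1 V2 k) * T" for b b'
  proof -
    have i0: "0 \<le> icum V1 V2 al \<beta> g s k b' t" by (rule icum_bounds(1)[OF spw t(1)])
    have "real (csize V1 V2 k) * t \<le> real (csize V1 V2 k) * T"
      using t by (intro mult_left_mono) auto
    hence i1: "icum V1 V2 al \<beta> g s k b' t \<le> real (csize V1 V2 k) * T"
      using icum_bounds(2)[OF spw t(1), of V1 V2 al \<beta> g k b'] by linarith
    have "Np k b (icum V1 V2 al \<beta> g s k b' t) \<le> Np k b (real (csize V1 V2 k) * T)"
      by (rule mono_onD[OF Np_mono]) (use i0 i1 in auto)
    thus ?thesis using Np_nonneg[OF i0, of b] i0 i1 by (simp add: abs_le_iff)
  qed
  show ?thesis
    unfolding Mproc_eq_compensated[OF t(1)] using bound[of True False] bound[of False True] by (smt (verit))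
qed

lemma Mproc_continuous_at_right:
  assumes t: "0 \<le> t"
  shows "continuous (at_right t) (Mproc V1 V2 al \<beta> g s Np k)"
proof -
  have "continuous (at_right t) (\<lambda>x. Np k b (icum V1 V2 al \<beta> g s k b' x))" for b b'
    using icum_continuous_at_right[OF spw t] icum_mono[OF spw t] icum_bounds(1)[OF spw t]
    by (intro pw_const_cadlag_comp_continuous_at_right[OF Np_pw]) auto
  hence "continuous (at_right t) (\<lambda>x. (Np k True (icum V1 V2 al \<beta> g s k False x) - icum V1 V2 al \<beta> g s k False x)
         - (Np k False (icum V1 V2 al \<beta> g s k True x) - icum V1 V2 al \<beta> g s k True x))"
    using icum_continuous_at_right[OF spw t] by (intro continuous_intros) auto
  moreover have "eventually (\<lambda>x. Mproc V1 V2 al \<beta> g s Np k x =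
         (Np k True (icum V1 V2 al \<beta> g s k False x) - icum V1 V2 al \<beta> g s k False x)
         - (Np k False (icum V1 V2 al \<beta> g s k True x) - icum V1 V2 al \<beta> g s k True x)) (at_right t)"
    using eventually_at_right_less[of t]
    by eventually_elim (rule Mproc_eq_compensated, use t in linarith)
  ultimately show ?thesis
    using Mproc_eq_compensated[OF t] unfolding continuous_within by (simp add: tendsto_cong)
qed

end

section \<open>Convergence in probability\<close>

text \<open>Convergence in probability to \<open>0\<close> from above, with explicit exceptional events so that no
  measurability of \<open>X n\<close> is needed.\<close>
definition vanishes_in_probability :: "(nat \<Rightarrow> 'a measure) \<Rightarrow> (nat \<Rightarrow> 'a \<Rightarrow> real) \<Rightarrow> bool" where
  "vanishes_in_probability P X \<longleftrightarrow> (\<forall>\<delta>>0. \<exists>b. b \<longlonglongrightarrow> 0 \<and> (\<forall>\<^sub>F n in sequentially.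
      \<exists>E\<in>sets (P n). measure (P n) E \<le> b n \<and> (\<forall>\<omega>\<in>space (P n) - E. X n \<omega> \<le> \<delta>)))"

lemma vanishes_in_probability_mono:
  assumes "vanishes_in_probability P Y" "\<And>n \<omega>. \<omega> \<in> space (P n) \<Longrightarrow> X n \<omega> \<le> Y n \<omega>"
  shows "vanishes_in_probability P X"
  unfolding vanishes_in_probability_def
proof (intro allI impI)
  fix \<delta> :: real assume "0 < \<delta>"
  then obtain b where "b \<longlonglongrightarrow> 0" and ev: "\<forall>\<^sub>F n in sequentially. \<exists>E\<in>sets (P n).
        measure (P n) E \<le> b n \<and> (\<forall>\<omega>\<in>space (P n) - E. Y n \<omega> \<le> \<delta>)"
    using assms(1) unfolding vanishes_in_probability_def by blast
  moreover have "\<forall>\<^sub>F n in sequentially. \<exists>E\<in>sets (P n).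
        measure (P n) E \<le> b n \<and> (\<forall>\<omega>\<in>space (P n) - E. X n \<omega> \<le> \<delta>)"
    using ev
  proof eventually_elim
    case (elim n)
    then obtain E where E: "E \<in> sets (P n)" "measure (P n) E \<le> b n"
      "\<forall>\<omega>\<in>space (P n) - E. Y n \<omega> \<le> \<delta>" by blast
    have "\<forall>\<omega>\<in>space (P n) - E. X n \<omega> \<le> \<delta>"
      using E(3) assms(2) by (meson DiffD1 order_trans)
    thus ?case using E(1,2) by blast
  qed
  ultimately show "\<exists>b. b \<longlonglongrightarrow> 0 \<and> (\<forall>\<^sub>F n in sequentially. \<exists>E\<in>sets (P n).
        measure (P n) E \<le> b n \<and> (\<forall>\<omega>\<in>space (P n) - E. X n \<omega> \<le> \<delta>))" by blast
qed

lemma vanishes_in_probability_add: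
  assumes prob: "\<And>n. prob_space (P n)"
    and X: "vanishes_in_probability P X" and Y: "vanishes_in_probability P Y"
  shows "vanishes_in_probability P (\<lambda>n \<omega>. X n \<omega> + Y n \<omega>)"
  unfolding vanishes_in_probability_def
proof (intro allI impI)
  fix \<delta> :: real assume "0 < \<delta>"
  hence "0 < \<delta> / 2" by simp
  then obtain bX bY where bX: "bX \<longlonglongrightarrow> 0" "\<forall>\<^sub>F n in sequentially. \<exists>E\<in>sets (P n).
        measure (P n) E \<le> bX n \<and> (\<forall>\<omega>\<in>space (P n) - E. X n \<omega> \<le> \<delta> / 2)"
    and bY: "bY \<longlonglongrightarrow> 0" "\<forall>\<^sub>F n in sequentially. \<exists>E\<in>sets (P n).
        measure (P n) E \<le> bY n \<and> (\<forall>\<omega>\<in>space (P n) - E. Y n \<omega> \<le> \<delta> / 2)"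
    using X Y unfolding vanishes_in_probability_def by meson
  have "\<forall>\<^sub>F n in sequentially. \<exists>E\<in>sets (P n). measure (P n) E \<le> bX n + bY n
          \<and> (\<forall>\<omega>\<in>space (P n) - E. X n \<omega> + Y n \<omega> \<le> \<delta>)"
    using bX(2) bY(2)
  proof eventually_elim
    case (elim n)
    then obtain E1 E2 where E1: "E1 \<in> sets (P n)" "measure (P n) E1 \<le> bX n"
        "\<forall>\<omega>\<in>space (P n) - E1. X n \<omega> \<le> \<delta> / 2"
      and E2: "E2 \<in> sets (P n)" "measure (P n) E2 \<le> bY n" "\<forall>\<omega>\<in>space (P n) - E2. Y n \<omega> \<le> \<delta> / 2"
      by blast
    interpret prob_space "P n" by (rule prob)
    have "measure (P n) (E1 \<union> E2) \<le> measure (P n) E1 + measure (P n) E2"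
      by (rule measure_subadditive) (use E1(1) E2(1) in auto)
    hence "measure (P n) (E1 \<union> E2) \<le> bX n + bY n"
      using E1(2) E2(2) by linarith
    moreover have "\<forall>\<omega>\<in>space (P n) - (E1 \<union> E2). X n \<omega> + Y n \<omega> \<le> \<delta>"
    proof
      fix \<omega> assume "\<omega> \<in> space (P n) - (E1 \<union> E2)"
      hence "X n \<omega> \<le> \<delta> / 2" "Y n \<omega> \<le> \<delta> / 2" using E1(3) E2(3) by auto
      thus "X n \<omega> + Y n \<omega> \<le> \<delta>" by linarith
    qed
    moreover have "E1 \<union> E2 \<in> sets (P n)" using E1(1) E2(1) by simp
    ultimately show ?case by blast
  qed
  moreover have "(\<lambda>n. bX n + bY n) \<longlonglongrightarrow> 0"
    using tendsto_add[OF bX(1) bY(1)] by simp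
  ultimately show "\<exists>b. b \<longlonglongrightarrow> 0 \<and> (\<forall>\<^sub>F n in sequentially. \<exists>E\<in>sets (P n). measure (P n) E \<le> b n
          \<and> (\<forall>\<omega>\<in>space (P n) - E. X n \<omega> + Y n \<omega> \<le> \<delta>))"
    by blast
qed

lemma cdf_return_0: "cdf (return borel 0) x = (if 0 \<le> x then 1 else 0 :: real)"
  by (simp add: cdf_def2 measure_return indicator_def)

lemma not_isCont_cdf_return_0: "\<not> isCont (cdf (return borel (0 :: real))) 0"
proof
  assume "isCont (cdf (return borel (0 :: real))) 0"
  hence "(\<lambda>n. cdf (return borel 0) (- inverse (real (Suc n)))) \<longlonglongrightarrow> cdf (return borel 0) (0 :: real)"
    using isCont_tendsto_compose[OF _ tendsto_minus[OF LIMSEQ_inverse_real_of_nat]] by fastforce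
  thus False by (simp add: cdf_return_0 LIMSEQ_const_iff)
qed

lemma weak_conv_return_0_if_vanishes_in_probability:
  fixes X :: "nat \<Rightarrow> 'a \<Rightarrow> real"
  assumes prob: "\<And>n. prob_space (P n)"
    and X_meas: "\<And>n. X n \<in> borel_measurable (P n)"
    and X_nonneg: "\<And>n \<omega>. \<omega> \<in> space (P n) \<Longrightarrow> 0 \<le> X n \<omega>"
    and X: "vanishes_in_probability P X"
  shows "weak_conv_m (\<lambda>n. distr (P n) borel (X n)) (return borel 0)"
  unfolding weak_conv_m_def weak_conv_def
proof (intro allI impI)
  fix x :: real
  assume cont: "isCont (cdf (return borel 0)) x"
  have cdf_n: "cdf (distr (P n) borel (X n)) x = measure (P n) {\<omega>\<in>space (P n). X n \<omega> \<le> x}" for n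
    unfolding cdf_def2 by (subst measure_distr[OF X_meas]) (auto simp: vimage_def Int_def conj_commute)
  show "(\<lambda>n. cdf (distr (P n) borel (X n)) x) \<longlonglongrightarrow> cdf (return borel 0) x"
  proof (cases "x < 0")
    case True
    have empty: "{\<omega>\<in>space (P n). X n \<omega> \<le> x} = {}" for n using X_nonneg True by force
    have "cdf (distr (P n) borel (X n)) x = 0" for n unfolding cdf_n empty by simp
    thus ?thesis using True by (simp add: cdf_return_0)
  next
    case False
    have "x \<noteq> 0" using cont not_isCont_cdf_return_0 by blast
    hence x: "0 < x" using False by simp
    obtain b where b: "b \<longlonglongrightarrow> 0" and ev: "\<forall>\<^sub>F n in sequentially. \<exists>E\<in>sets (P n).
        measure (P n) E \<le> b n \<and> (\<forall>\<omega>\<in>space (P n) - E. X n \<omega> \<le> x)"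
      using X x unfolding vanishes_in_probability_def by auto
    have "\<forall>\<^sub>F n in sequentially. 1 - b n \<le> cdf (distr (P n) borel (X n)) x"
      using ev
    proof eventually_elim
      case (elim n)
      then obtain E where E: "E \<in> sets (P n)" "measure (P n) E \<le> b n"
        "\<forall>\<omega>\<in>space (P n) - E. X n \<omega> \<le> x" by blast
      interpret prob_space "P n" by (rule prob)
      have "{\<omega>\<in>space (P n). X n \<omega> \<le> x} \<in> sets (P n)" using X_meas[of n] by measurable
      hence "measure (P n) (space (P n) - E) \<le> measure (P n) {\<omega>\<in>space (P n). X n \<omega> \<le> x}"
        using E(3) by (intro finite_measure_mono) auto
      thus ?case using prob_compl[OF E(1)] E(2) by (simp add: cdf_n)
    qed
    moreover have "\<forall>\<^sub>F n in sequentially. cdf (distr (P n) borel (X n)) x \<le> 1"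
      unfolding cdf_n using prob_space.prob_le_1[OF prob] by (intro always_eventually allI)
    moreover have "(\<lambda>n. 1 - b n) \<longlonglongrightarrow> 1" using tendsto_diff[OF tendsto_const b] by simp
    ultimately have "(\<lambda>n. cdf (distr (P n) borel (X n)) x) \<longlonglongrightarrow> 1"
      by (rule tendsto_sandwich[OF _ _ _ tendsto_const])
    thus ?thesis using x by (simp add: cdf_return_0)
  qed
qed

section \<open>The martingales of the Glauber dynamics\<close>

lemma exists_grid_mesh:
  assumes L: "0 < L" and a: "0 < a"
  obtains m :: nat and h :: real where "1 \<le> m" "0 < h" "real m * h = L" "h \<le> a / 4"
proof
  define m where "m = nat \<lceil>4 * L / a\<rceil>"
  have m: "4 * L / a \<le> real m" unfolding m_def by linarith
  have "0 < \<lceil>4 * L / a\<rceil>" using L a by simp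
  thus m1: "1 \<le> m" by (simp add: m_def le_nat_iff)
  show "0 < L / real m" "real m * (L / real m) = L" using L m1 by simp_all
  show "L / real m \<le> a / 4" using m m1 a by (simp add: field_simps)
qed

text \<open>The parameters \<open>al\<close> and \<open>\<beta>\<close> occur only in \<open>mart\<close>, so they are not arguments of the
  locale predicate.\<close>
locale glauber_poisson = prob_space M
  for M :: "'a measure" +
  fixes V1 V2 :: nat and al :: real and \<beta> :: ereal
    and G :: "'a \<Rightarrow> nat \<Rightarrow> nat \<Rightarrow> bool" and \<sigma> :: "'a \<Rightarrow> real \<Rightarrow> nat \<Rightarrow> real"
    and N :: "nat \<times> bool \<Rightarrow> 'a \<Rightarrow> real \<Rightarrow> real"
  assumes G_measurable[measurable]: "\<And>u v. (\<lambda>\<omega>. G \<omega> u v) \<in> measurable M (count_space UNIV)"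
    and \<sigma>_measurable[measurable]: "\<And>t u. (\<lambda>\<omega>. \<sigma> \<omega> t u) \<in> borel_measurable M"
    and \<sigma>_pw_const_cadlag: "\<And>\<omega>. \<omega> \<in> space M \<Longrightarrow> pw_const_cadlag (\<sigma> \<omega>)"
    and \<sigma>_spins: "\<And>\<omega>. \<omega> \<in> space M \<Longrightarrow> \<forall>t\<ge>0. \<forall>u\<in>nodes V1 V2. \<sigma> \<omega> t u = 1 \<or> \<sigma> \<omega> t u = -1"
    and N_poisson: "indep_unit_poisson M ({1, 2} \<times> UNIV) N"
begin

abbreviation mart :: "nat \<Rightarrow> 'a \<Rightarrow> real \<Rightarrow> real" where
  "mart k \<omega> t \<equiv> Mproc V1 V2 al \<beta> (G \<omega>) (\<sigma> \<omega>) (\<lambda>k' sg. N (k', sg) \<omega>) k t"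

context
  fixes k :: nat
  assumes k: "k \<in> {1, 2}"
begin

lemma N_measurable[measurable]: "(\<lambda>\<omega>. N (k, b) \<omega> t) \<in> borel_measurable M"
  using N_poisson k unfolding indep_unit_poisson_def by blast

lemma N_path_props:
  assumes "\<omega> \<in> space M"
  shows "mono_on {0..} (N (k, b) \<omega>)" and "\<And>x. 0 \<le> x \<Longrightarrow> 0 \<le> N (k, b) \<omega> x"
    and "pw_const_cadlag (N (k, b) \<omega>)"
proof -
  have kb: "(k, b) \<in> {1, 2} \<times> (UNIV :: bool set)" using k by simp
  note N = N_poisson[unfolded indep_unit_poisson_def]
  show "mono_on {0..} (N (k, b) \<omega>)" "pw_const_cadlag (N (k, b) \<omega>)"
    using N kb assms by blast+
  fix x :: real assume "0 \<le> x"
  hence "N (k, b) \<omega> x \<in> \<nat>" using N kb assms by blast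
  thus "0 \<le> N (k, b) \<omega> x" by (rule Nats_cases) simp
qed

lemma abs_mart_le:
  assumes "\<omega> \<in> space M" "0 \<le> t" "t \<le> T"
  shows "\<bar>mart k \<omega> t\<bar> \<le> N (k, True) \<omega> (real (csize V1 V2 k) * T)
           + N (k, False) \<omega> (real (csize V1 V2 k) * T) + 2 * (real (csize V1 V2 k) * T)"
  using abs_Mproc_le[where Np = "\<lambda>k' sg. N (k', sg) \<omega>",
      OF \<sigma>_pw_const_cadlag[OF assms(1)] \<sigma>_spins[OF assms(1)] N_path_props[OF assms(1)]] assms(2,3)
  by simp

lemma mart_continuous_at_right:
  assumes "\<omega> \<in> space M" "0 \<le> t"
  shows "continuous (at_right t) (mart k \<omega>)"
  using Mproc_continuous_at_right[where Np = "\<lambda>k' sg. N (k', sg) \<omega>",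
      OF \<sigma>_pw_const_cadlag[OF assms(1)] \<sigma>_spins[OF assms(1)] N_path_props[OF assms(1)] assms(2)] .

lemma bdd_above_scaled_abs_mart:
  assumes "\<omega> \<in> space M" "0 \<le> c"
  shows "bdd_above ((\<lambda>t. c * \<bar>mart k \<omega> t\<bar>) ` {0..T})"
  using abs_mart_le[OF assms(1)] assms(2) by (intro bdd_aboveI2) (auto intro: mult_left_mono)

lemma mart_measurable:
  assumes t: "0 \<le> t"
  shows "(\<lambda>\<omega>. mart k \<omega> t) \<in> borel_measurable M"
proof -
  have rate_meas: "(\<lambda>\<omega>. rate_sum V1 V2 al \<beta> (G \<omega>) (\<sigma> \<omega>) k sg \<tau>) \<in> borel_measurable M" for sg \<tau>
    unfolding rate_sum_def frate_def Delta_def by measurable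
  have icum_meas[measurable]: "(\<lambda>\<omega>. icum V1 V2 al \<beta> (G \<omega>) (\<sigma> \<omega>) k sg t) \<in> borel_measurable M" for sg
    unfolding icum_eq_integral_rate_sum
    using rate_meas \<sigma>_pw_const_cadlag rate_sum_bounds
    by (intro borel_measurable_integral_pw_const_cadlag[where B = "real (csize V1 V2 k)"]
          pw_const_cadlag_rate_sum t) auto
  have "(\<lambda>\<omega>. integral {0..t} (signed_rate_sum V1 V2 al \<beta> (G \<omega>) (\<sigma> \<omega>) k)) \<in> borel_measurable M"
    using \<sigma>_pw_const_cadlag \<sigma>_spins abs_signed_rate_sum_le
    by (intro borel_measurable_integral_pw_const_cadlag[where B = "real (csize V1 V2 k)"]
          pw_const_cadlag_signed_rate_sum t) (auto simp: signed_rate_sum_def frate_def Delta_def)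
  moreover have "(\<lambda>\<omega>. N (k, b) \<omega> (icum V1 V2 al \<beta> (G \<omega>) (\<sigma> \<omega>) k sg t)) \<in> borel_measurable M" for b sg
  proof -
    have joint: "(\<lambda>x. N (k, b) (fst x) (max 0 (snd x))) \<in> borel_measurable (M \<Otimes>\<^sub>M lborel)"
      using N_path_props(3) by (intro pw_const_cadlag_joint_measurable) auto
    have "(\<lambda>\<omega>. (\<omega>, icum V1 V2 al \<beta> (G \<omega>) (\<sigma> \<omega>) k sg t)) \<in> measurable M (M \<Otimes>\<^sub>M lborel)"
      by measurable
    from measurable_compose[OF this joint]
    have "(\<lambda>\<omega>. N (k, b) \<omega> (max 0 (icum V1 V2 al \<beta> (G \<omega>) (\<sigma> \<omega>) k sg t))) \<in> borel_measurable M"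
      by simp
    moreover have "max 0 (icum V1 V2 al \<beta> (G \<omega>) (\<sigma> \<omega>) k sg t) = icum V1 V2 al \<beta> (G \<omega>) (\<sigma> \<omega>) k sg t"
      if "\<omega> \<in> space M" for \<omega>
      using icum_bounds(1)[OF \<sigma>_pw_const_cadlag[OF that] t] by simp
    ultimately show ?thesis by (subst (asm) measurable_cong) auto
  qed
  ultimately show ?thesis
    unfolding Mproc_eq_integral_signed_rate_sum by measurable
qed

lemma SUP_scaled_abs_mart_nonneg:
  assumes "\<omega> \<in> space M" "0 \<le> T" "0 \<le> c"
  shows "0 \<le> (SUP t\<in>{0..T}. c * \<bar>mart k \<omega> t\<bar>)"
  using assms by (intro cSUP_upper2[OF bdd_above_scaled_abs_mart, of _ _ 0]) auto

lemma borel_measurable_SUP_scaled_abs_mart: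
  assumes "0 \<le> T" "0 \<le> c"
  shows "(\<lambda>\<omega>. SUP t\<in>{0..T}. c * \<bar>mart k \<omega> t\<bar>) \<in> borel_measurable M"
  using assms mart_measurable bdd_above_scaled_abs_mart mart_continuous_at_right
  by (intro borel_measurable_SUP_continuous_at_right) (auto intro!: continuous_intros)

text \<open>Outside an event of probability \<open>O(V T / a\<^sup>2)\<close>, both Poisson processes stay within \<open>a/4\<close>
  of their means on a grid of mesh \<open>\<le> a/4\<close> covering \<open>[0, V T]\<close>, and hence \<open>|mart k| \<le> a\<close> on
  \<open>[0, T]\<close>.\<close>
lemma abs_mart_le_outside_small_event:
  assumes V: "0 < csize V1 V2 k" and T: "0 < T" and a: "0 < a"
    and small: "64 * (real (csize V1 V2 k) * T) / a\<^sup>2 \<le> 1/2"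
  shows "\<exists>E\<in>events. prob E \<le> 256 * (real (csize V1 V2 k) * T) / a\<^sup>2
           \<and> (\<forall>\<omega>\<in>space M - E. \<forall>t\<in>{0..T}. \<bar>mart k \<omega> t\<bar> \<le> a)"
proof -
  define L where "L = real (csize V1 V2 k) * T"
  have "0 < L" using V T by (simp add: L_def)
  then obtain m h where m: "1 \<le> m" and h: "0 < h" and mh: "real m * h = L" and ha: "h \<le> a / 4"
    using exists_grid_mesh a by metis
  define A where "A = a / 8"
  have A: "0 < A" using a by (simp add: A_def)
  have mhA: "real m * h / A\<^sup>2 = 64 * L / a\<^sup>2"
    unfolding mh A_def by (simp add: power2_eq_square field_simps)
  define E where "E b = {\<omega>\<in>space M. \<exists>j\<le>m. 2*A \<le> \<bar>N (k, b) \<omega> (real j * h) - real j * h\<bar>}" for b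
  have E_events: "E b \<in> events" for b unfolding E_def by measurable
  have prob_E: "prob (E b) \<le> 128 * L / a\<^sup>2" for b
  proof -
    have "prob (E b) \<le> 2 * (real m * h / A\<^sup>2)"
      unfolding E_def using k mhA small
      by (intro poisson_grid_maximal_ineq[OF prob_space_axioms _ N_poisson _ h A m]) (auto simp: L_def)
    thus ?thesis using mhA by simp
  qed
  show ?thesis
  proof (intro bexI[of _ "E True \<union> E False"] conjI ballI)
    have "prob (E True \<union> E False) \<le> prob (E True) + prob (E False)"
      using E_events by (intro measure_subadditive) auto
    moreover have "128 * L / a\<^sup>2 + 128 * L / a\<^sup>2 = 256 * (real (csize V1 V2 k) * T) / a\<^sup>2"
      by (simp add: L_def field_simps)
    ultimately show "prob (E True \<union> E False) \<le> 256 * (real (csize V1 V2 k) * T) / a\<^sup>2"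
      using prob_E[of True] prob_E[of False] by linarith
    fix \<omega> t assume \<omega>: "\<omega> \<in> space M - (E True \<union> E False)" and t: "t \<in> {0..T}"
    have "\<forall>j\<le>m. \<bar>N (k, b) \<omega> (real j * h) - real j * h\<bar> < 2*A" for b
    proof -
      have "\<omega> \<notin> E b" using \<omega> by (cases b) auto
      thus ?thesis using \<omega> unfolding E_def by (metis (no_types, lifting) DiffD1 mem_Collect_eq not_le)
    qed
    hence "\<bar>mart k \<omega> t\<bar> \<le> 2 * (2*A + h)"
      using \<omega> t mh
      by (intro abs_Mproc_le_grid_deviation[where Np = "\<lambda>k' sg. N (k', sg) \<omega>" and m = m,
            OF \<sigma>_pw_const_cadlag \<sigma>_spins N_path_props h]) (auto simp: L_def)
    also have "\<dots> \<le> a" using ha by (simp add: A_def)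
    finally show "\<bar>mart k \<omega> t\<bar> \<le> a" .
  qed (use E_events in auto)
qed

lemma SUP_scaled_abs_mart_le_outside_small_event:
  assumes V: "0 < csize V1 V2 k" and T: "0 < T" and c: "0 < c" and \<delta>: "0 < \<delta>"
    and small: "c\<^sup>2 * T / real (csize V1 V2 k) \<le> \<delta>\<^sup>2 / 128"
  shows "\<exists>E\<in>events. prob E \<le> 256 / \<delta>\<^sup>2 * (c\<^sup>2 * T / real (csize V1 V2 k))
           \<and> (\<forall>\<omega>\<in>space M - E. (SUP t\<in>{0..T}. c / real (csize V1 V2 k) * \<bar>mart k \<omega> t\<bar>) \<le> \<delta>)"
proof -
  let ?V = "real (csize V1 V2 k)"
  define a where "a = \<delta> * ?V / c"
  have a: "0 < a" using \<delta> V c by (simp add: a_def)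
  have bound_eq: "256 * (?V * T) / a\<^sup>2 = 256 / \<delta>\<^sup>2 * (c\<^sup>2 * T / ?V)"
    unfolding a_def using V \<delta> c by (simp add: field_simps power2_eq_square)
  have "64 * (?V * T) / a\<^sup>2 = 64 / \<delta>\<^sup>2 * (c\<^sup>2 * T / ?V)"
    unfolding a_def using V \<delta> c by (simp add: field_simps power2_eq_square)
  also have "\<dots> \<le> 64 / \<delta>\<^sup>2 * (\<delta>\<^sup>2 / 128)"
    using small by (intro mult_left_mono) auto
  also have "\<dots> = 1/2" using \<delta> by simp
  finally obtain E where E: "E \<in> events" "prob E \<le> 256 * (?V * T) / a\<^sup>2"
      "\<forall>\<omega>\<in>space M - E. \<forall>t\<in>{0..T}. \<bar>mart k \<omega> t\<bar> \<le> a"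
    using abs_mart_le_outside_small_event[OF V T a] by blast
  show ?thesis
  proof (intro bexI[OF _ E(1)] conjI ballI)
    show "prob E \<le> 256 / \<delta>\<^sup>2 * (c\<^sup>2 * T / ?V)" using E(2) bound_eq by simp
    fix \<omega> assume \<omega>: "\<omega> \<in> space M - E"
    show "(SUP t\<in>{0..T}. c / ?V * \<bar>mart k \<omega> t\<bar>) \<le> \<delta>"
    proof (rule cSUP_least)
      fix t assume "t \<in> {0..T}"
      hence "c / ?V * \<bar>mart k \<omega> t\<bar> \<le> c / ?V * a"
        using E(3) \<omega> c by (intro mult_left_mono) auto
      also have "\<dots> = \<delta>" using V c by (simp add: a_def)
      finally show "c / ?V * \<bar>mart k \<omega> t\<bar> \<le> \<delta>" .
    qed (use T in simp)
  qed
qed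

end

lemma bdd_above_norm_mart:
  assumes "\<omega> \<in> space M"
  shows "bdd_above ((\<lambda>t. norm (c1 * mart 1 \<omega> t / d1, c2 * mart 2 \<omega> t / d2)) ` {0..T})"
proof -
  obtain B1 where B1: "\<And>t. t \<in> {0..T} \<Longrightarrow> \<bar>c1 / d1\<bar> * \<bar>mart 1 \<omega> t\<bar> \<le> B1"
    using bdd_above_scaled_abs_mart[of 1 \<omega> "\<bar>c1 / d1\<bar>" T] assms unfolding bdd_above_def
    by (metis abs_ge_zero imageI insert_iff)
  obtain B2 where B2: "\<And>t. t \<in> {0..T} \<Longrightarrow> \<bar>c2 / d2\<bar> * \<bar>mart 2 \<omega> t\<bar> \<le> B2"
    using bdd_above_scaled_abs_mart[of 2 \<omega> "\<bar>c2 / d2\<bar>" T] assms unfolding bdd_above_def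
    by (metis abs_ge_zero imageI insert_iff)
  have "norm (c1 * mart 1 \<omega> t / d1, c2 * mart 2 \<omega> t / d2) \<le> B1 + B2" if "t \<in> {0..T}" for t
  proof -
    have "norm (c1 * mart 1 \<omega> t / d1, c2 * mart 2 \<omega> t / d2)
          \<le> \<bar>c1 / d1\<bar> * \<bar>mart 1 \<omega> t\<bar> + \<bar>c2 / d2\<bar> * \<bar>mart 2 \<omega> t\<bar>"
      using norm_Pair_le[of "c1 * mart 1 \<omega> t / d1" "c2 * mart 2 \<omega> t / d2"] by (simp add: abs_mult)
    thus ?thesis using B1[OF that] B2[OF that] by linarith
  qed
  thus ?thesis by (intro bdd_aboveI2)
qed

lemma borel_measurable_SUP_norm_mart:
  assumes "0 \<le> T"
  shows "(\<lambda>\<omega>. SUP t\<in>{0..T}. norm (c1 * mart 1 \<omega> t / d1, c2 * mart 2 \<omega> t / d2)) \<in> borel_measurable M"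
proof (rule borel_measurable_SUP_continuous_at_right[OF assms])
  fix t :: real assume "0 \<le> t"
  thus "(\<lambda>\<omega>. norm (c1 * mart 1 \<omega> t / d1, c2 * mart 2 \<omega> t / d2)) \<in> borel_measurable M"
    using mart_measurable[of 1 t] mart_measurable[of 2 t] by measurable
next
  fix \<omega> t assume "\<omega> \<in> space M" "0 \<le> t" "t < T"
  thus "continuous (at_right t) (\<lambda>t. norm (c1 * mart 1 \<omega> t / d1, c2 * mart 2 \<omega> t / d2))"
    using mart_continuous_at_right[of 1 \<omega> t] mart_continuous_at_right[of 2 \<omega> t]
    unfolding divide_inverse by (intro continuous_intros) auto
qed (rule bdd_above_norm_mart)

lemma SUP_norm_mart_le:
  assumes \<omega>: "\<omega> \<in> space M" and T: "0 \<le> T" "T \<le> T'" and c: "0 \<le> c" "0 \<le> d1" "0 \<le> d2"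
  shows "(SUP t\<in>{0..T}. norm (c * mart 1 \<omega> t / d1, c * mart 2 \<omega> t / d2))
         \<le> (SUP t\<in>{0..T'}. c / d1 * \<bar>mart 1 \<omega> t\<bar>) + (SUP t\<in>{0..T'}. c / d2 * \<bar>mart 2 \<omega> t\<bar>)"
proof (rule cSUP_least)
  fix t assume t: "t \<in> {0..T}"
  have "norm (c * mart 1 \<omega> t / d1, c * mart 2 \<omega> t / d2) \<le> c / d1 * \<bar>mart 1 \<omega> t\<bar> + c / d2 * \<bar>mart 2 \<omega> t\<bar>"
    using norm_Pair_le[of "c * mart 1 \<omega> t / d1" "c * mart 2 \<omega> t / d2"] c by (simp add: abs_mult)
  also have "\<dots> \<le> (SUP t\<in>{0..T'}. c / d1 * \<bar>mart 1 \<omega> t\<bar>) + (SUP t\<in>{0..T'}. c / d2 * \<bar>mart 2 \<omega> t\<bar>)"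
    using t T bdd_above_scaled_abs_mart[OF _ \<omega>, of _ "c / d1"] bdd_above_scaled_abs_mart[OF _ \<omega>, of _ "c / d2"] c
    by (intro add_mono cSUP_upper) auto
  finally show "norm (c * mart 1 \<omega> t / d1, c * mart 2 \<omega> t / d2)
         \<le> (SUP t\<in>{0..T'}. c / d1 * \<bar>mart 1 \<omega> t\<bar>) + (SUP t\<in>{0..T'}. c / d2 * \<bar>mart 2 \<omega> t\<bar>)" .
qed (use T in simp)

end

lemma glauber_poisson_if_is_glauber_sbm:
  assumes "prob_space M" "is_glauber_sbm M V1 V2 pin pout \<eta> al \<beta> G \<sigma>"
    and "indep_unit_poisson M ({1, 2} \<times> UNIV) N"
  shows "glauber_poisson M V1 V2 G \<sigma> N"
  using assms unfolding is_glauber_sbm_def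
  by (intro glauber_poisson.intro glauber_poisson_axioms.intro) simp_all

context
  fixes P :: "nat \<Rightarrow> 'a measure" and V1 V2 :: "nat \<Rightarrow> nat" and al :: "nat \<Rightarrow> real"
    and \<beta> :: "nat \<Rightarrow> ereal" and G :: "nat \<Rightarrow> 'a \<Rightarrow> nat \<Rightarrow> nat \<Rightarrow> bool"
    and \<sigma> :: "nat \<Rightarrow> 'a \<Rightarrow> real \<Rightarrow> nat \<Rightarrow> real" and N :: "nat \<Rightarrow> nat \<times> bool \<Rightarrow> 'a \<Rightarrow> real \<Rightarrow> real"
    and \<gamma> :: "nat \<Rightarrow> real"
  assumes gp: "\<And>n. glauber_poisson (P n) (V1 n) (V2 n) (G n) (\<sigma> n) (N n)"
    and \<gamma>: "\<And>n. 0 < \<gamma> n"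
begin

lemma vanishes_in_probability_SUP_scaled_mart:
  fixes T :: "nat \<Rightarrow> real"
  assumes k: "k \<in> {1, 2}"
    and V: "(\<lambda>n. real (csize (V1 n) (V2 n) k) / real n) \<longlonglongrightarrow> v" "0 < v"
    and T: "\<And>n. 0 < T n" and lim: "(\<lambda>n. (\<gamma> n)\<^sup>2 * T n / real n) \<longlonglongrightarrow> 0"
  shows "vanishes_in_probability P (\<lambda>n \<omega>. SUP t\<in>{0..T n}. \<gamma> n / real (csize (V1 n) (V2 n) k)
           * \<bar>Mproc (V1 n) (V2 n) (al n) (\<beta> n) (G n \<omega>) (\<sigma> n \<omega>) (\<lambda>k' sg. N n (k', sg) \<omega>) k t\<bar>)"
  unfolding vanishes_in_probability_def
proof (intro allI impI)
  fix \<delta> :: real assume \<delta>: "0 < \<delta>"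
  define r where "r n = ((\<gamma> n)\<^sup>2 * T n / real n) / (real (csize (V1 n) (V2 n) k) / real n)" for n
  have "r \<longlonglongrightarrow> 0 / v"
    unfolding r_def[abs_def] using V by (intro tendsto_intros lim) auto
  hence r: "(\<lambda>n. 256 / \<delta>\<^sup>2 * r n) \<longlonglongrightarrow> 0"
    by (intro tendsto_mult_right_zero) simp
  have "\<forall>\<^sub>F n in sequentially. r n < \<delta>\<^sup>2 / 128"
    using \<open>r \<longlonglongrightarrow> 0 / v\<close> \<delta> by (intro order_tendstoD(2)) auto
  hence "\<forall>\<^sub>F n in sequentially. \<exists>E\<in>sets (P n). measure (P n) E \<le> 256 / \<delta>\<^sup>2 * r n
          \<and> (\<forall>\<omega>\<in>space (P n) - E. (SUP t\<in>{0..T n}. \<gamma> n / real (csize (V1 n) (V2 n) k)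
             * \<bar>Mproc (V1 n) (V2 n) (al n) (\<beta> n) (G n \<omega>) (\<sigma> n \<omega>) (\<lambda>k' sg. N n (k', sg) \<omega>) k t\<bar>) \<le> \<delta>)"
    using order_tendstoD(1)[OF V] eventually_gt_at_top[of 0]
  proof eventually_elim
    case (elim n)
    have "0 < csize (V1 n) (V2 n) k" using elim(2,3) by (simp add: zero_less_divide_iff)
    moreover have "r n = (\<gamma> n)\<^sup>2 * T n / real (csize (V1 n) (V2 n) k)"
      using elim(3) by (simp add: r_def)
    ultimately show ?case
      using glauber_poisson.SUP_scaled_abs_mart_le_outside_small_event[OF gp k _ T \<gamma> \<delta>] elim(1)
      by simp
  qed
  with r show "\<exists>b. b \<longlonglongrightarrow> 0 \<and> (\<forall>\<^sub>F n in sequentially. \<exists>E\<in>sets (P n). measure (P n) E \<le> b n \<and>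
          (\<forall>\<omega>\<in>space (P n) - E. (SUP t\<in>{0..T n}. \<gamma> n / real (csize (V1 n) (V2 n) k)
             * \<bar>Mproc (V1 n) (V2 n) (al n) (\<beta> n) (G n \<omega>) (\<sigma> n \<omega>) (\<lambda>k' sg. N n (k', sg) \<omega>) k t\<bar>) \<le> \<delta>))"
    by blast
qed

lemma weak_conv_SUP_scaled_mart:
  fixes T :: "nat \<Rightarrow> real"
  assumes k: "k \<in> {1, 2}"
    and V: "(\<lambda>n. real (csize (V1 n) (V2 n) k) / real n) \<longlonglongrightarrow> v" "0 < v"
    and T: "\<And>n. 0 < T n" and lim: "(\<lambda>n. (\<gamma> n)\<^sup>2 * T n / real n) \<longlonglongrightarrow> 0"
  shows "weak_conv_m (\<lambda>n. distr (P n) borel (\<lambda>\<omega>. SUP t\<in>{0..T n}. \<gamma> n / real (csize (V1 n) (V2 n) k)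
           * \<bar>Mproc (V1 n) (V2 n) (al n) (\<beta> n) (G n \<omega>) (\<sigma> n \<omega>) (\<lambda>k' sg. N n (k', sg) \<omega>) k t\<bar>))
           (return borel 0)"
proof (rule weak_conv_return_0_if_vanishes_in_probability)
  show "prob_space (P n)" for n
    using gp[of n] by (rule glauber_poisson.axioms(1))
  show "(\<lambda>\<omega>. SUP t\<in>{0..T n}. \<gamma> n / real (csize (V1 n) (V2 n) k)
           * \<bar>Mproc (V1 n) (V2 n) (al n) (\<beta> n) (G n \<omega>) (\<sigma> n \<omega>) (\<lambda>k' sg. N n (k', sg) \<omega>) k t\<bar>)
        \<in> borel_measurable (P n)" for n
    using T[of n] \<gamma>[of n] by (intro glauber_poisson.borel_measurable_SUP_scaled_abs_mart[OF gp k]) auto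
  show "0 \<le> (SUP t\<in>{0..T n}. \<gamma> n / real (csize (V1 n) (V2 n) k)
           * \<bar>Mproc (V1 n) (V2 n) (al n) (\<beta> n) (G n \<omega>) (\<sigma> n \<omega>) (\<lambda>k' sg. N n (k', sg) \<omega>) k t\<bar>)"
    if "\<omega> \<in> space (P n)" for n \<omega>
    using that T[of n] \<gamma>[of n] by (intro glauber_poisson.SUP_scaled_abs_mart_nonneg[OF gp k]) auto
qed (rule vanishes_in_probability_SUP_scaled_mart[OF assms])

text \<open>The componentwise suprema are taken over \<open>[0, T + 1]\<close> only because the horizon has to be
  positive.\<close>
lemma weak_conv_zero_D_scaled_mart:
  assumes V1: "(\<lambda>n. real (V1 n) / real n) \<longlonglongrightarrow> v1" "0 < v1"
    and V2: "(\<lambda>n. real (V2 n) / real n) \<longlonglongrightarrow> v2" "0 < v2"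
    and lim: "(\<lambda>n. \<gamma> n / sqrt (real n)) \<longlonglongrightarrow> 0"
  shows "weak_conv_zero_D P (\<lambda>n \<omega> t.
           (\<gamma> n * Mproc (V1 n) (V2 n) (al n) (\<beta> n) (G n \<omega>) (\<sigma> n \<omega>) (\<lambda>k' sg. N n (k', sg) \<omega>) 1 t / real (V1 n),
            \<gamma> n * Mproc (V1 n) (V2 n) (al n) (\<beta> n) (G n \<omega>) (\<sigma> n \<omega>) (\<lambda>k' sg. N n (k', sg) \<omega>) 2 t / real (V2 n)))"
  unfolding weak_conv_zero_D_def
proof (intro allI impI)
  fix T :: real assume T: "0 \<le> T"
  let ?M = "\<lambda>n k \<omega> t. Mproc (V1 n) (V2 n) (al n) (\<beta> n) (G n \<omega>) (\<sigma> n \<omega>) (\<lambda>k' sg. N n (k', sg) \<omega>) k t"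
  let ?X = "\<lambda>k n \<omega>. SUP t\<in>{0..T + 1}. \<gamma> n / real (csize (V1 n) (V2 n) k) * \<bar>?M n k \<omega> t\<bar>"
  have lim': "(\<lambda>n. (\<gamma> n)\<^sup>2 * (T + 1) / real n) \<longlonglongrightarrow> 0"
  proof -
    have "(\<lambda>n. (T + 1) * (\<gamma> n / sqrt (real n))\<^sup>2) \<longlonglongrightarrow> (T + 1) * 0\<^sup>2"
      by (intro tendsto_intros lim)
    thus ?thesis by (simp add: power_divide mult.commute)
  qed
  have X: "vanishes_in_probability P (?X k)" if "k \<in> {1, 2}" for k
    using that V1 V2 T lim'
    by (intro vanishes_in_probability_SUP_scaled_mart[where v = "if k = 1 then v1 else v2"]) (auto simp: csize_def)
  have le: "(SUP t\<in>{0..T}. norm (\<gamma> n * ?M n 1 \<omega> t / real (V1 n), \<gamma> n * ?M n 2 \<omega> t / real (V2 n)))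
            \<le> ?X 1 n \<omega> + ?X 2 n \<omega>" if "\<omega> \<in> space (P n)" for n \<omega>
    using glauber_poisson.SUP_norm_mart_le[OF gp that T, of "T + 1" "\<gamma> n"] \<gamma>[of n]
    by (simp add: csize_def)
  show "weak_conv_m (\<lambda>n. distr (P n) borel (\<lambda>\<omega>. SUP t\<in>{0..T}.
          norm (\<gamma> n * ?M n 1 \<omega> t / real (V1 n), \<gamma> n * ?M n 2 \<omega> t / real (V2 n)))) (return borel 0)"
  proof (rule weak_conv_return_0_if_vanishes_in_probability)
    show "prob_space (P n)" for n
      using gp[of n] by (rule glauber_poisson.axioms(1))
    show "(\<lambda>\<omega>. SUP t\<in>{0..T}. norm (\<gamma> n * ?M n 1 \<omega> t / real (V1 n), \<gamma> n * ?M n 2 \<omega> t / real (V2 n)))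
          \<in> borel_measurable (P n)" for n
      by (rule glauber_poisson.borel_measurable_SUP_norm_mart[OF gp T])
    show "0 \<le> (SUP t\<in>{0..T}. norm (\<gamma> n * ?M n 1 \<omega> t / real (V1 n), \<gamma> n * ?M n 2 \<omega> t / real (V2 n)))"
      if "\<omega> \<in> space (P n)" for n \<omega>
      using that T by (intro cSUP_upper2[OF glauber_poisson.bdd_above_norm_mart[OF gp], of _ _ 0]) auto
    show "vanishes_in_probability P (\<lambda>n \<omega>. SUP t\<in>{0..T}.
            norm (\<gamma> n * ?M n 1 \<omega> t / real (V1 n), \<gamma> n * ?M n 2 \<omega> t / real (V2 n)))"
    proof (rule vanishes_in_probability_mono)
      show "vanishes_in_probability P (\<lambda>n \<omega>. ?X 1 n \<omega> + ?X 2 n \<omega>)"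
        using glauber_poisson.axioms(1)[OF gp] X[of 1] X[of 2] by (rule vanishes_in_probability_add) simp_all
    qed (rule le)
  qed
qed

end

theorem proposition7p1:
  fixes P :: "nat \<Rightarrow> 'a measure"
    and V1 V2 :: "nat \<Rightarrow> nat" and v1 v2 :: real
    and a b :: real and lam :: "nat \<Rightarrow> real"
    and \<alpha> :: real and \<eta> :: real and \<beta> :: "nat \<Rightarrow> ereal"
    and G :: "nat \<Rightarrow> 'a \<Rightarrow> nat \<Rightarrow> nat \<Rightarrow> bool"
    and \<sigma> :: "nat \<Rightarrow> 'a \<Rightarrow> real \<Rightarrow> nat \<Rightarrow> real"
    and N :: "nat \<Rightarrow> nat \<times> bool \<Rightarrow> 'a \<Rightarrow> real \<Rightarrow> real"
    and \<gamma> tt :: "nat \<Rightarrow> real"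
  assumes prob: "\<And>n. prob_space (P n)"
    and V1lim: "(\<lambda>n. real (V1 n) / real n) \<longlonglongrightarrow> v1" and v1pos: "0 < v1"
    and V2lim: "(\<lambda>n. real (V2 n) / real n) \<longlonglongrightarrow> v2" and v2pos: "0 < v2"
    and ab: "0 < b" "b < a"
    and lam_inf: "filterlim lam at_top sequentially"
    and lam_ok: "\<And>n. 0 \<le> lam n \<and> a * lam n / real n \<le> 1"
    and eta: "0 < \<eta>" "\<eta> \<le> 1"
    and beta: "\<And>n. 0 < \<beta> n"
    and glauber: "\<And>n. is_glauber_sbm (P n) (V1 n) (V2 n) (a * lam n / real n) (b * lam n / real n)
                          \<eta> (\<alpha> * lam n / real n) (\<beta> n) (G n) (\<sigma> n)"
    and poisson: "\<And>n. indep_unit_poisson (P n) ({1, 2} \<times> UNIV) (N n)"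
    and construction: "\<And>n k. k \<in> {1, 2} \<Longrightarrow> AE \<omega> in P n. \<forall>t\<ge>0.
           zmag (V1 n) (V2 n) (\<sigma> n \<omega>) k t - zmag (V1 n) (V2 n) (\<sigma> n \<omega>) k 0
         = 2 / real (csize (V1 n) (V2 n) k)
           * (N n (k, True) \<omega> (icum (V1 n) (V2 n) (\<alpha> * lam n / real n) (\<beta> n) (G n \<omega>) (\<sigma> n \<omega>) k False t)
              - N n (k, False) \<omega> (icum (V1 n) (V2 n) (\<alpha> * lam n / real n) (\<beta> n) (G n \<omega>) (\<sigma> n \<omega>) k True t))"
    and gt_pos: "\<And>n. 0 < \<gamma> n \<and> 0 < tt n"
    and gt_lim: "(\<lambda>n. (\<gamma> n)\<^sup>2 * tt n / real n) \<longlonglongrightarrow> 0"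
  shows "(\<forall>k\<in>{1, 2}. weak_conv_m
            (\<lambda>n. distr (P n) borel (\<lambda>\<omega>. SUP t\<in>{0..tt n}.
                \<gamma> n / real (csize (V1 n) (V2 n) k)
                * \<bar>Mproc (V1 n) (V2 n) (\<alpha> * lam n / real n) (\<beta> n) (G n \<omega>) (\<sigma> n \<omega>)
                         (\<lambda>k' sg. N n (k', sg) \<omega>) k t\<bar>))
            (return borel 0))
       \<and> ((\<lambda>n. \<gamma> n / sqrt (real n)) \<longlonglongrightarrow> 0 \<longrightarrow>
          weak_conv_zero_D P (\<lambda>n \<omega> t.
            (\<gamma> n * Mproc (V1 n) (V2 n) (\<alpha> * lam n / real n) (\<beta> n) (G n \<omega>) (\<sigma> n \<omega>)
                         (\<lambda>k' sg. N n (k', sg) \<omega>) 1 t / real (V1 n),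
             \<gamma> n * Mproc (V1 n) (V2 n) (\<alpha> * lam n / real n) (\<beta> n) (G n \<omega>) (\<sigma> n \<omega>)
                         (\<lambda>k' sg. N n (k', sg) \<omega>) 2 t / real (V2 n))))"
proof -
  have gp: "\<And>n. glauber_poisson (P n) (V1 n) (V2 n) (G n) (\<sigma> n) (N n)"
    using glauber_poisson_if_is_glauber_sbm[OF prob glauber poisson] .
  have \<gamma>: "\<And>n. 0 < \<gamma> n" and tt: "\<And>n. 0 < tt n" using gt_pos by auto
  show ?thesis
  proof (intro conjI ballI impI)
    fix k :: nat assume k: "k \<in> {1, 2}"
    have Vk: "(\<lambda>n. real (csize (V1 n) (V2 n) k) / real n) \<longlonglongrightarrow> (if k = 1 then v1 else v2)"
      using k V1lim V2lim by (auto simp: csize_def)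
    show "weak_conv_m (\<lambda>n. distr (P n) borel (\<lambda>\<omega>. SUP t\<in>{0..tt n}.
            \<gamma> n / real (csize (V1 n) (V2 n) k)
            * \<bar>Mproc (V1 n) (V2 n) (\<alpha> * lam n / real n) (\<beta> n) (G n \<omega>) (\<sigma> n \<omega>)
                     (\<lambda>k' sg. N n (k', sg) \<omega>) k t\<bar>)) (return borel 0)"
      using v1pos v2pos by (intro weak_conv_SUP_scaled_mart[OF gp \<gamma> k Vk _ tt gt_lim]) simp
  next
    assume "(\<lambda>n. \<gamma> n / sqrt (real n)) \<longlonglongrightarrow> 0"
    thus "weak_conv_zero_D P (\<lambda>n \<omega> t.
            (\<gamma> n * Mproc (V1 n) (V2 n) (\<alpha> * lam n / real n) (\<beta> n) (G n \<omega>) (\<sigma> n \<omega>)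
                         (\<lambda>k' sg. N n (k', sg) \<omega>) 1 t / real (V1 n),
             \<gamma> n * Mproc (V1 n) (V2 n) (\<alpha> * lam n / real n) (\<beta> n) (G n \<omega>) (\<sigma> n \<omega>)
                         (\<lambda>k' sg. N n (k', sg) \<omega>) 2 t / real (V2 n)))"
      by (rule weak_conv_zero_D_scaled_mart[OF gp \<gamma> V1lim v1pos V2lim v2pos])
  qed
qed

end
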